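(* Let $\varrho\in C^{0,\varsigma}(\Gamma)$, $\varsigma\in(\frac12,1)$, with $\varrho(\pm1)=0$. Then $\varrho/\mathrm w\in C^{0,\varsigma-1/2}(\Gamma)$ and there is a constant $C_2$ (independent of $\tau_1,\tau_2$) such that for all distinct $\tau_1,\tau_2\in\Gamma$, $$\Big|\frac{\varrho(\tau_1)}{\mathrm w(\tau_1)}-\frac{\varrho(\tau_2)}{\mathrm w(\tau_2)}\Big|\le C_2\min\Big\{\frac1{|1-\tau_1^2|^{1/2}},\frac1{|1-\tau_2^2|^{1/2}}\Big\}|\tau_1-\tau_2|^{\varsigma}.$$
   Context: $\Delta$ is a closed analytic Jordan arc with endpoints $\pm1$, oriented from $-1$ to $1$. $\Gamma$ is an infinitely smooth Jordan curve containing $\Delta$ whose interior domain $\Omega$ lies to the left of $\Delta$. $\mathrm w(z)=\sqrt{z^2-1}$ is holomorphic in $\overline{\mathbb C}\setminus\Delta$ with $\mathrm w(z)/z\to1$ at $\infty$; on $\Gamma$, $\mathrm w$ denotes its boundary values from within $\Omega$. $C^{0,\upsilon}(\Gamma)$ is the space of uniformly $\upsilon$-Hölder continuous functions on $\Gamma$. *)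

theory Defs
  imports "HOL-Complex_Analysis.Complex_Analysis"
begin

definition holder_on :: "real \<Rightarrow> complex set \<Rightarrow> (complex \<Rightarrow> complex) \<Rightarrow> bool" where
  "holder_on u S f \<longleftrightarrow> (\<exists>C. \<forall>x\<in>S. \<forall>y\<in>S. norm (f x - f y) \<le> C * dist x y powr u)"

text \<open>An infinitely smooth (regular) Jordan curve, parametrised 1-periodically by g on the reals,
  injective on one period; its trace is  path_image g = g ` {0..1}.\<close>
definition smooth_jordan_param :: "(real \<Rightarrow> complex) \<Rightarrow> bool" where
  "smooth_jordan_param g \<longleftrightarrow>
     (\<forall>t. g (t + 1) = g t) \<and> inj_on g {0..<1} \<and>
     (\<exists>D :: nat \<Rightarrow> real \<Rightarrow> complex. D 0 = g \<and>
        (\<forall>n t. (D n has_vector_derivative D (Suc n) t) (at t)) \<and> (\<forall>t. D 1 t \<noteq> 0))"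

definition analytic_arc :: "(complex \<Rightarrow> complex) \<Rightarrow> bool" where
  "analytic_arc F \<longleftrightarrow>
     (\<exists>U. open U \<and> complex_of_real ` {0..1} \<subseteq> U \<and> F holomorphic_on U \<and>
          inj_on F (complex_of_real ` {0..1}) \<and>
          (\<forall>t\<in>{0..1}. deriv F (complex_of_real t) \<noteq> 0))"

definition arc_image :: "(complex \<Rightarrow> complex) \<Rightarrow> complex set" where
  "arc_image F = F ` (complex_of_real ` {0..1})"

end

theory Submission
  imports Defs
begin

text \<open>Write \<open>A(\<tau>) = |\<tau>\<^sup>2 - 1|\<close>, so that \<open>|wb \<tau>| = \<surd>A(\<tau>)\<close> on \<open>\<Gamma>\<close>, and the vanishing of
  \<open>\<rho>\<close> at \<open>\<plusminus>1\<close> gives \<open>|\<rho>(\<tau>)| \<le> C A(\<tau>)\<^bsup>\<sigma>\<^esup>\<close>. Let \<open>A(\<tau>2) \<le> A(\<tau>1)\<close> and \<open>d = |\<tau>1 - \<tau>2|\<close>.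
  If d is not small compared with \<open>A(\<tau>2)\<close>, then \<open>A(\<tau>1) = O(d)\<close> and both quotients are
  bounded by \<open>C A(\<tau>1)\<^bsup>\<sigma>-1/2\<^esup>\<close>. Otherwise write
  \<open>\<rho>1/w1 - \<rho>2/w2 = (\<rho>1 - \<rho>2)/w1 + \<rho>2 (w2 - w1)/(w1 w2)\<close>; everything then rests on
  \<open>|w1 - w2| |w2| \<le> |\<tau>1\<^sup>2 - \<tau>2\<^sup>2|\<close>, i.e. on wb not jumping between the two square roots.
  This holds because a smooth Jordan curve is of bounded turning, so \<open>\<tau>1, \<tau>2\<close> lie on a
  short connected piece of \<open>\<Gamma>\<close> away from \<open>\<plusminus>1\<close>, and because wb is continuous on
  \<open>\<Gamma> - {\<plusminus>1}\<close>. Off the arc this is continuity of w; on the arc, the inverse of the analytic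
  parametrisation maps the inside of \<open>\<Gamma>\<close> near the arc into the upper half plane, where
  \<open>w \<circ> F\<close> has a bounded derivative, so that wb is even Lipschitz along the arc.\<close>

lemma holder_onE:
  assumes "holder_on u S f"
  obtains C where "C \<ge> 0" "\<And>x y. x \<in> S \<Longrightarrow> y \<in> S \<Longrightarrow> norm (f x - f y) \<le> C * dist x y powr u"
proof -
  obtain C where C: "\<forall>x\<in>S. \<forall>y\<in>S. norm (f x - f y) \<le> C * dist x y powr u"
    using assms unfolding holder_on_def by blast
  show thesis
  proof (rule that[of "max C 0"])
    fix x y assume "x \<in> S" "y \<in> S"
    then have "norm (f x - f y) \<le> C * dist x y powr u" using C by blast
    also have "\<dots> \<le> max C 0 * dist x y powr u" by (intro mult_right_mono) auto
    finally show "norm (f x - f y) \<le> max C 0 * dist x y powr u" .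
  qed simp
qed

lemma powr_mult_le_mult_powr:
  fixes A d s :: real
  assumes "0 < d" "d \<le> A" "0 \<le> s" "s \<le> 1"
  shows "A powr s * d \<le> A * d powr s"
proof -
  have "A powr s * d = (A powr s * d powr s) * d powr (1 - s)"
    using assms(1) by (simp add: mult.assoc powr_add[symmetric])
  also have "\<dots> \<le> (A powr s * d powr s) * A powr (1 - s)"
    using assms by (intro mult_left_mono powr_mono2) auto
  also have "\<dots> = A * d powr s"
    using assms by (simp add: algebra_simps powr_add[symmetric])
  finally show ?thesis .
qed

lemma norm_power2_diff_le:
  fixes x y :: complex
  assumes "norm x \<le> R" "norm y \<le> R"
  shows "norm (x\<^sup>2 - y\<^sup>2) \<le> 2 * R * norm (x - y)"
proof -
  have "norm (x\<^sup>2 - y\<^sup>2) = norm (x - y) * norm (x + y)"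
    by (simp add: power2_eq_square algebra_simps flip: norm_mult)
  also have "\<dots> \<le> norm (x - y) * (2 * R)"
    using assms norm_triangle_ineq[of x y] by (intro mult_left_mono) auto
  finally show ?thesis by (simp add: algebra_simps)
qed

lemma min_norm_le_norm_power2_minus_one:
  fixes z :: complex
  shows "min (norm (z - 1)) (norm (z + 1)) \<le> norm (z\<^sup>2 - 1)"
proof -
  have "2 \<le> norm (z - 1) + norm (z + 1)"
    using norm_triangle_ineq4[of "z + 1" "z - 1"] by (simp add: norm_minus_commute)
  then have "min (norm (z - 1)) (norm (z + 1)) \<le> norm (z - 1) * norm (z + 1)"
    by (cases "norm (z - 1) \<le> norm (z + 1)")
      (auto intro: order_trans[OF _ mult_left_mono[of 1]] order_trans[OF _ mult_right_mono[of 1]])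
  also have "\<dots> = norm (z\<^sup>2 - 1)"
    by (simp add: power2_eq_square algebra_simps flip: norm_mult)
  finally show ?thesis .
qed

lemma compact_continuous_inverse_at:
  fixes f :: "'a::metric_space \<Rightarrow> 'b::heine_borel"
  assumes "compact K" "continuous_on K f" "x0 \<in> K"
    and inj: "\<And>x. x \<in> K \<Longrightarrow> f x = f x0 \<Longrightarrow> x = x0" and "0 < \<epsilon>"
  obtains \<delta> where "0 < \<delta>" "\<And>x. x \<in> K \<Longrightarrow> dist (f x) (f x0) < \<delta> \<Longrightarrow> dist x x0 < \<epsilon>"
proof -
  define K' where "K' = K \<inter> {x. \<epsilon> \<le> dist x x0}"
  have "closed {x. \<epsilon> \<le> dist x x0}"
    by (intro closed_Collect_le continuous_intros)
  then have "compact K'"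
    unfolding K'_def using assms(1) by (simp add: compact_Int_closed)
  moreover have "continuous_on K' f"
    using assms(2) continuous_on_subset unfolding K'_def by blast
  ultimately have closed: "closed (f ` K')"
    using compact_continuous_image compact_imp_closed by blast
  have not_in: "f x0 \<notin> f ` K'"
  proof
    assume "f x0 \<in> f ` K'"
    then obtain x where x: "x \<in> K'" "f x = f x0" by (metis imageE)
    then have "x = x0" using inj[of x] unfolding K'_def by simp
    then show False using x(1) \<open>0 < \<epsilon>\<close> unfolding K'_def by simp
  qed
  obtain \<delta> where \<delta>: "0 < \<delta>" "\<forall>y\<in>f ` K'. \<delta> \<le> dist (f x0) y"
    using separate_point_closed[OF closed not_in] by blast
  show thesis
  proof (rule that[OF \<delta>(1)])
    fix x assume x: "x \<in> K" "dist (f x) (f x0) < \<delta>"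
    show "dist x x0 < \<epsilon>"
    proof (rule ccontr)
      assume "\<not> dist x x0 < \<epsilon>"
      then have "x \<in> K'" using x(1) unfolding K'_def by simp
      then have "\<delta> \<le> dist (f x0) (f x)" using \<delta>(2) by blast
      then show False using x(2) by (simp add: dist_commute)
    qed
  qed
qed

lemma norm_diff_le_vector_derivative_bound:
  fixes f :: "real \<Rightarrow> 'a::real_normed_vector"
  assumes "convex S" "\<And>x. x \<in> S \<Longrightarrow> (f has_vector_derivative f' x) (at x)"
    "\<And>x. x \<in> S \<Longrightarrow> norm (f' x) \<le> B" "x \<in> S" "y \<in> S"
  shows "norm (f x - f y) \<le> B * \<bar>x - y\<bar>"
proof -
  have "norm (f x - f y) \<le> B * norm (x - y)"
  proof (rule differentiable_bound[OF assms(1) _ _ assms(4,5)])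
    fix z assume "z \<in> S"
    then show "(f has_derivative (\<lambda>h. h *\<^sub>R f' z)) (at z within S)"
      using assms(2) unfolding has_vector_derivative_def by (blast intro: has_derivative_at_withinI)
    show "onorm (\<lambda>h. h *\<^sub>R f' z) \<le> B"
      using mult_right_mono[OF assms(3)[OF \<open>z \<in> S\<close>], of "\<bar>h\<bar>" for h]
    by (intro onorm_le) (simp add: mult.commute)
  qed
  then show ?thesis by simp
qed

lemma eventually_Im_shift_gt:
  fixes f :: "complex \<Rightarrow> complex"
  assumes f: "(f has_field_derivative f') (at p)" and fD: "f' * D = 1"
  shows "\<forall>\<^sub>F e in at_right (0::real). Im (f p) < Im (f (p + complex_of_real e * \<i> * D))"
proof -
  define h where "h e = complex_of_real e * \<i> * D" for e :: real
  have D: "D \<noteq> 0" using fD by auto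
  have pos: "\<forall>\<^sub>F e in at_right (0::real). 0 < e"
    by (rule eventually_at_right_less)
  have lim_h: "filterlim (\<lambda>e. p + h e) (at p) (at_right 0)"
  proof (rule filterlim_atI)
    show "((\<lambda>e. p + h e) \<longlongrightarrow> p) (at_right 0)"
      unfolding h_def by (auto intro!: tendsto_eq_intros)
    show "\<forall>\<^sub>F e in at_right 0. p + h e \<noteq> p"
      using pos by eventually_elim (use D in \<open>simp add: h_def\<close>)
  qed
  have "((\<lambda>e. (f (p + h e) - f p) / h e) \<longlongrightarrow> f') (at_right 0)"
    using filterlim_compose[OF f[unfolded has_field_derivative_iff] lim_h] by simp
  then have "((\<lambda>e. Im ((f (p + h e) - f p) / h e * (\<i> * D))) \<longlongrightarrow> Im (f' * (\<i> * D))) (at_right 0)"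
    by (intro tendsto_intros)
  moreover have "Im (f' * (\<i> * D)) = 1"
    using fD by (simp add: algebra_simps)
  ultimately have "((\<lambda>e. Im ((f (p + h e) - f p) / h e * (\<i> * D))) \<longlongrightarrow> 1) (at_right 0)"
    by metis
  from order_tendstoD(1)[OF this zero_less_one]
  have "\<forall>\<^sub>F e in at_right 0. 0 < Im ((f (p + h e) - f p) / h e * (\<i> * D))" .
  then show ?thesis
    using pos
  proof eventually_elim
    case (elim e)
    have "(f (p + h e) - f p) / h e * (\<i> * D) = (f (p + h e) - f p) / complex_of_real e"
      using D elim(2) by (simp add: h_def field_simps)
    then have "0 < Im (f (p + h e) - f p) / e"
      using elim(1) by (simp add: Im_divide_of_real)
    then show ?case
      using elim(2) by (simp add: h_def zero_less_divide_iff)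
  qed
qed

section \<open>Quotients by a square root of \<open>\<tau>\<^sup>2 - 1\<close>\<close>

text \<open>The branch hypothesis below says that v does not jump between the two values of
  the square root at scales small compared with the distance to the endpoints \<open>\<plusminus>1\<close>.\<close>

locale sqrt_quotient =
  fixes S :: "complex set" and \<rho> v :: "complex \<Rightarrow> complex" and \<sigma> C R c :: real
  assumes bounded: "\<And>\<tau>. \<tau> \<in> S \<Longrightarrow> norm \<tau> \<le> R"
    and v_square: "\<And>\<tau>. \<tau> \<in> S \<Longrightarrow> (v \<tau>)\<^sup>2 = \<tau>\<^sup>2 - 1"
    and holder: "\<And>x y. x \<in> S \<Longrightarrow> y \<in> S \<Longrightarrow> norm (\<rho> x - \<rho> y) \<le> C * dist x y powr \<sigma>"
    and C_nonneg: "0 \<le> C"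
    and ends: "1 \<in> S" "-1 \<in> S" "\<rho> 1 = 0" "\<rho> (-1) = 0"
    and sigma: "1/2 < \<sigma>" "\<sigma> \<le> 1"
    and c: "0 < c" "c \<le> 1"
    and branch: "\<And>\<tau>1 \<tau>2. \<tau>1 \<in> S \<Longrightarrow> \<tau>2 \<in> S \<Longrightarrow> norm (\<tau>1 - \<tau>2) < c * norm (\<tau>2\<^sup>2 - 1) \<Longrightarrow>
        norm (v \<tau>1 - v \<tau>2) * norm (v \<tau>2) \<le> norm (\<tau>1\<^sup>2 - \<tau>2\<^sup>2)"
begin

abbreviation A :: "complex \<Rightarrow> real" where "A \<tau> \<equiv> norm (\<tau>\<^sup>2 - 1)"

lemma norm_v: "\<tau> \<in> S \<Longrightarrow> norm (v \<tau>) = sqrt (A \<tau>)"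
  by (metis v_square norm_power real_sqrt_abs abs_norm_cancel)

lemma norm_rho_le: assumes "\<tau> \<in> S" shows "norm (\<rho> \<tau>) \<le> C * A \<tau> powr \<sigma>"
proof -
  have "norm (\<rho> \<tau>) \<le> C * min (norm (\<tau> - 1)) (norm (\<tau> + 1)) powr \<sigma>"
    using holder[OF assms ends(1)] holder[OF assms ends(2)] ends(3,4)
    by (simp add: dist_norm min_def)
  also have "\<dots> \<le> C * A \<tau> powr \<sigma>"
    using sigma C_nonneg min_norm_le_norm_power2_minus_one[of \<tau>]
    by (intro mult_left_mono powr_mono2) auto
  finally show ?thesis .
qed

lemma norm_quotient_le: assumes "\<tau> \<in> S" shows "norm (\<rho> \<tau> / v \<tau>) \<le> C * A \<tau> powr (\<sigma> - 1/2)"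
proof (cases "A \<tau> = 0")
  case False
  then have "norm (\<rho> \<tau> / v \<tau>) \<le> C * A \<tau> powr \<sigma> / sqrt (A \<tau>)"
    using norm_rho_le[OF assms] norm_v[OF assms] by (simp add: norm_divide divide_right_mono)
  also have "\<dots> = C * A \<tau> powr (\<sigma> - 1/2)"
    using False by (simp add: powr_diff powr_half_sqrt)
  finally show ?thesis .
qed (use norm_v[OF assms] in simp)

lemma quotient_diff_le_far:
  assumes "\<tau>1 \<in> S" "\<tau>2 \<in> S" "A \<tau>2 \<le> A \<tau>1"
  shows "norm (\<rho> \<tau>1 / v \<tau>1 - \<rho> \<tau>2 / v \<tau>2) \<le> 2 * C * A \<tau>1 powr (\<sigma> - 1/2)"
proof -
  have "C * A \<tau>2 powr (\<sigma> - 1/2) \<le> C * A \<tau>1 powr (\<sigma> - 1/2)"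
    using assms(3) sigma C_nonneg by (intro mult_left_mono powr_mono2) auto
  then show ?thesis
    using norm_quotient_le[OF assms(1)] norm_quotient_le[OF assms(2)]
      norm_triangle_ineq4[of "\<rho> \<tau>1 / v \<tau>1" "\<rho> \<tau>2 / v \<tau>2"] by linarith
qed

lemma weight_le_far:
  assumes "\<tau>1 \<in> S" "\<tau>2 \<in> S" "c * A \<tau>2 \<le> norm (\<tau>1 - \<tau>2)"
  shows "A \<tau>1 \<le> (1/c + 2 * R) * norm (\<tau>1 - \<tau>2)"
proof -
  have "A \<tau>1 \<le> A \<tau>2 + norm (\<tau>1\<^sup>2 - \<tau>2\<^sup>2)"
    using norm_triangle_ineq[of "\<tau>2\<^sup>2 - 1" "\<tau>1\<^sup>2 - \<tau>2\<^sup>2"] by simp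
  moreover have "A \<tau>2 \<le> norm (\<tau>1 - \<tau>2) / c"
    using assms(3) c by (simp add: pos_le_divide_eq mult.commute)
  ultimately show ?thesis
    using norm_power2_diff_le[OF bounded[OF assms(1)] bounded[OF assms(2)]]
    by (simp add: algebra_simps)
qed

text \<open>Near the diagonal, split \<open>\<rho>1/v1 - \<rho>2/v2 = (\<rho>1 - \<rho>2)/v1 + \<rho>2 (v2 - v1)/(v1 v2)\<close>; the
  vanishing of \<open>\<rho>\<close> at \<open>\<plusminus>1\<close> compensates the factor \<open>1/v2\<close>.\<close>

lemma quotient_diff_le_near:
  assumes \<tau>: "\<tau>1 \<in> S" "\<tau>2 \<in> S" and A21: "A \<tau>2 \<le> A \<tau>1"
    and near: "norm (\<tau>1 - \<tau>2) < c * A \<tau>2"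
  shows "norm (\<rho> \<tau>1 / v \<tau>1 - \<rho> \<tau>2 / v \<tau>2) \<le> C * (1 + 2 * R) * norm (\<tau>1 - \<tau>2) powr \<sigma> / sqrt (A \<tau>1)"
proof (cases "\<tau>1 = \<tau>2")
  case False
  define d where "d = norm (\<tau>1 - \<tau>2)"
  have d: "0 < d" "d \<le> A \<tau>2"
    using False near c mult_right_mono[of c 1 "A \<tau>2"] unfolding d_def by auto
  have v2: "0 < norm (v \<tau>2)" "0 < A \<tau>2" "norm (v \<tau>2) * norm (v \<tau>2) = A \<tau>2"
    using d norm_v[OF \<tau>(2)] by auto
  have v1: "0 < norm (v \<tau>1)" "norm (v \<tau>1) = sqrt (A \<tau>1)"
    using d A21 norm_v[OF \<tau>(1)] by auto
  have "norm (v \<tau>1 - v \<tau>2) * norm (v \<tau>2) \<le> 2 * R * d"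
    using branch[OF \<tau> near] norm_power2_diff_le[OF bounded[OF \<tau>(1)] bounded[OF \<tau>(2)]]
    unfolding d_def by linarith
  then have v12: "norm (v \<tau>2 - v \<tau>1) \<le> 2 * R * d / norm (v \<tau>2)"
    using v2 by (simp add: pos_le_divide_eq norm_minus_commute)
  have split: "\<rho> \<tau>1 / v \<tau>1 - \<rho> \<tau>2 / v \<tau>2
      = (\<rho> \<tau>1 - \<rho> \<tau>2) / v \<tau>1 + \<rho> \<tau>2 * (v \<tau>2 - v \<tau>1) / (v \<tau>1 * v \<tau>2)"
  proof -
    have "v \<tau>1 \<noteq> 0" "v \<tau>2 \<noteq> 0" using v1(1) v2(1) by auto
    then show ?thesis by (simp add: field_simps)
  qed
  have first: "norm ((\<rho> \<tau>1 - \<rho> \<tau>2) / v \<tau>1) \<le> C * d powr \<sigma> / sqrt (A \<tau>1)"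
    using holder[OF \<tau>] v1 by (simp add: norm_divide dist_norm d_def divide_right_mono)
  have "norm (\<rho> \<tau>2 * (v \<tau>2 - v \<tau>1) / (v \<tau>1 * v \<tau>2))
      = norm (\<rho> \<tau>2) * norm (v \<tau>2 - v \<tau>1) / (sqrt (A \<tau>1) * norm (v \<tau>2))"
    using v1 by (simp add: norm_divide norm_mult)
  also have "\<dots> \<le> C * A \<tau>2 powr \<sigma> * (2 * R * d / norm (v \<tau>2)) / (sqrt (A \<tau>1) * norm (v \<tau>2))"
    using norm_rho_le[OF \<tau>(2)] v12 v1 v2 C_nonneg by (intro divide_right_mono mult_mono) auto
  also have "\<dots> = 2 * R * C * (A \<tau>2 powr \<sigma> * d) / (sqrt (A \<tau>1) * A \<tau>2)"
    using v2 by (simp add: field_simps)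
  also have "\<dots> \<le> 2 * R * C * (A \<tau>2 * d powr \<sigma>) / (sqrt (A \<tau>1) * A \<tau>2)"
    using powr_mult_le_mult_powr[of d "A \<tau>2" \<sigma>] d sigma C_nonneg bounded[OF ends(1)]
    by (intro divide_right_mono mult_left_mono) auto
  also have "\<dots> = 2 * R * C * d powr \<sigma> / sqrt (A \<tau>1)"
    using v2 by (simp add: field_simps)
  finally have second: "norm (\<rho> \<tau>2 * (v \<tau>2 - v \<tau>1) / (v \<tau>1 * v \<tau>2)) \<le> 2 * R * C * d powr \<sigma> / sqrt (A \<tau>1)" .
  have "C * d powr \<sigma> / sqrt (A \<tau>1) + 2 * R * C * d powr \<sigma> / sqrt (A \<tau>1)
      = C * (1 + 2 * R) * d powr \<sigma> / sqrt (A \<tau>1)"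
    by (simp add: algebra_simps add_divide_distrib)
  then show ?thesis
    using norm_triangle_ineq[of "(\<rho> \<tau>1 - \<rho> \<tau>2) / v \<tau>1" "\<rho> \<tau>2 * (v \<tau>2 - v \<tau>1) / (v \<tau>1 * v \<tau>2)"]
      first second unfolding split d_def by linarith
qed simp

definition Cw :: real where "Cw = 2 * C * (1/c + 2 * R) powr \<sigma> + C * (1 + 2 * R)"

lemma Cw_nonneg: "0 \<le> Cw"
  using C_nonneg bounded[OF ends(1)] unfolding Cw_def by simp

lemma quotient_diff_le_weighted:
  assumes \<tau>: "\<tau>1 \<in> S" "\<tau>2 \<in> S" and A21: "A \<tau>2 \<le> A \<tau>1"
  shows "norm (\<rho> \<tau>1 / v \<tau>1 - \<rho> \<tau>2 / v \<tau>2) \<le> Cw * norm (\<tau>1 - \<tau>2) powr \<sigma> / sqrt (A \<tau>1)"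
proof (cases "norm (\<tau>1 - \<tau>2) < c * A \<tau>2")
  case True
  have "norm (\<rho> \<tau>1 / v \<tau>1 - \<rho> \<tau>2 / v \<tau>2) \<le> C * (1 + 2 * R) * (norm (\<tau>1 - \<tau>2) powr \<sigma> / sqrt (A \<tau>1))"
    using quotient_diff_le_near[OF \<tau> A21 True] by simp
  also have "\<dots> \<le> Cw * (norm (\<tau>1 - \<tau>2) powr \<sigma> / sqrt (A \<tau>1))"
    using C_nonneg c unfolding Cw_def by (intro mult_right_mono) auto
  finally show ?thesis by simp
next
  case False
  define K where "K = 1/c + 2 * R"
  have "A \<tau>1 \<le> K * norm (\<tau>1 - \<tau>2)"
    using weight_le_far[OF \<tau>] False unfolding K_def by simp
  then have "A \<tau>1 powr \<sigma> \<le> K powr \<sigma> * norm (\<tau>1 - \<tau>2) powr \<sigma>"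
  proof -
    have K: "0 \<le> K" using c bounded[OF ends(1)] unfolding K_def by simp
    have "A \<tau>1 powr \<sigma> \<le> (K * norm (\<tau>1 - \<tau>2)) powr \<sigma>"
      using \<open>A \<tau>1 \<le> _\<close> sigma by (intro powr_mono2) auto
    also have "\<dots> = K powr \<sigma> * norm (\<tau>1 - \<tau>2) powr \<sigma>"
      using K by (simp add: powr_mult)
    finally show ?thesis .
  qed
  have "norm (\<rho> \<tau>1 / v \<tau>1 - \<rho> \<tau>2 / v \<tau>2) \<le> 2 * C * (A \<tau>1 powr \<sigma> / sqrt (A \<tau>1))"
    using quotient_diff_le_far[OF \<tau> A21] by (simp add: powr_diff powr_half_sqrt)
  also have "\<dots> \<le> 2 * C * (K powr \<sigma> * norm (\<tau>1 - \<tau>2) powr \<sigma> / sqrt (A \<tau>1))"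
    using \<open>A \<tau>1 powr \<sigma> \<le> _\<close> C_nonneg by (intro mult_left_mono divide_right_mono) auto
  also have "\<dots> \<le> Cw * norm (\<tau>1 - \<tau>2) powr \<sigma> / sqrt (A \<tau>1)"
    using C_nonneg bounded[OF ends(1)] unfolding Cw_def K_def
    by (simp add: divide_right_mono mult_right_mono algebra_simps)
  finally show ?thesis .
qed

lemma quotient_diff_le_holder:
  assumes \<tau>: "\<tau>1 \<in> S" "\<tau>2 \<in> S" and A21: "A \<tau>2 \<le> A \<tau>1"
  shows "norm (\<rho> \<tau>1 / v \<tau>1 - \<rho> \<tau>2 / v \<tau>2) \<le> (Cw + 2 * C) * norm (\<tau>1 - \<tau>2) powr (\<sigma> - 1/2)"
proof (cases "norm (\<tau>1 - \<tau>2) \<le> A \<tau>1")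
  case True
  show ?thesis
  proof (cases "\<tau>1 = \<tau>2")
    case False
    then have d: "0 < norm (\<tau>1 - \<tau>2)" "0 < A \<tau>1" using True by auto
    have "norm (\<rho> \<tau>1 / v \<tau>1 - \<rho> \<tau>2 / v \<tau>2) \<le> Cw * (norm (\<tau>1 - \<tau>2) powr \<sigma> / sqrt (A \<tau>1))"
      using quotient_diff_le_weighted[OF \<tau> A21] by simp
    also have "\<dots> \<le> Cw * (norm (\<tau>1 - \<tau>2) powr \<sigma> / sqrt (norm (\<tau>1 - \<tau>2)))"
      using True d Cw_nonneg by (intro mult_left_mono divide_left_mono) auto
    also have "\<dots> = Cw * norm (\<tau>1 - \<tau>2) powr (\<sigma> - 1/2)"
      using d by (simp add: powr_diff powr_half_sqrt)
    also have "\<dots> \<le> (Cw + 2 * C) * norm (\<tau>1 - \<tau>2) powr (\<sigma> - 1/2)"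
      using C_nonneg by (intro mult_right_mono) auto
    finally show ?thesis .
  qed simp
next
  case False
  have "norm (\<rho> \<tau>1 / v \<tau>1 - \<rho> \<tau>2 / v \<tau>2) \<le> 2 * C * A \<tau>1 powr (\<sigma> - 1/2)"
    using quotient_diff_le_far[OF \<tau> A21] .
  also have "\<dots> \<le> 2 * C * norm (\<tau>1 - \<tau>2) powr (\<sigma> - 1/2)"
    using False sigma C_nonneg by (intro mult_left_mono powr_mono2) auto
  also have "\<dots> \<le> (Cw + 2 * C) * norm (\<tau>1 - \<tau>2) powr (\<sigma> - 1/2)"
    using Cw_nonneg by (intro mult_right_mono) auto
  finally show ?thesis .
qed

theorem holder_on_quotient: "holder_on (\<sigma> - 1/2) S (\<lambda>\<tau>. \<rho> \<tau> / v \<tau>)"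
  unfolding holder_on_def
proof (intro exI ballI)
  fix x y assume "x \<in> S" "y \<in> S"
  then show "norm (\<rho> x / v x - \<rho> y / v y) \<le> (Cw + 2 * C) * dist x y powr (\<sigma> - 1/2)"
    using quotient_diff_le_holder[of x y] quotient_diff_le_holder[of y x]
    by (cases "A y \<le> A x") (auto simp: dist_norm norm_minus_commute)
qed

theorem quotient_diff_le_min_weight:
  assumes "\<tau>1 \<in> S - {1, -1}" "\<tau>2 \<in> S - {1, -1}"
  shows "norm (\<rho> \<tau>1 / v \<tau>1 - \<rho> \<tau>2 / v \<tau>2)
    \<le> Cw * min (1 / sqrt (norm (1 - \<tau>1\<^sup>2))) (1 / sqrt (norm (1 - \<tau>2\<^sup>2))) * norm (\<tau>1 - \<tau>2) powr \<sigma>"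
proof -
  have pos: "0 < A \<tau>1" "0 < A \<tau>2"
    using assms by (auto simp: power2_eq_1_iff)
  show ?thesis
  proof (cases "A \<tau>2 \<le> A \<tau>1")
    case True
    then have "min (1 / sqrt (A \<tau>1)) (1 / sqrt (A \<tau>2)) = 1 / sqrt (A \<tau>1)"
      using pos by (simp add: frac_le)
    then show ?thesis
      using quotient_diff_le_weighted[of \<tau>1 \<tau>2] True assms by (simp add: norm_minus_commute)
  next
    case False
    then have "min (1 / sqrt (A \<tau>1)) (1 / sqrt (A \<tau>2)) = 1 / sqrt (A \<tau>2)"
      using pos by (simp add: frac_le)
    then show ?thesis
      using quotient_diff_le_weighted[of \<tau>2 \<tau>1] False assms by (simp add: norm_minus_commute)
  qed
qed

end

section \<open>Square roots on connected sets\<close>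

text \<open>A variant of Ahlfors' bounded turning condition.\<close>

definition bounded_turning :: "real \<Rightarrow> 'a::metric_space set \<Rightarrow> bool" where
  "bounded_turning K S \<longleftrightarrow> (\<forall>x\<in>S. \<forall>y\<in>S. \<exists>J. connected J \<and> J \<subseteq> S \<and> x \<in> J \<and> y \<in> J \<and>
     (\<forall>z\<in>J. dist z y \<le> K * dist x y))"

text \<open>If \<open>f\<^sup>2\<close> stays close to \<open>f(y)\<^sup>2\<close> on a connected set, then f stays on the branch of f(y):
  the image is covered by the disjoint discs of radius \<open>|f(y)|\<close> about \<open>\<plusminus>f(y)\<close>.\<close>

lemma connected_square_root_branch:
  fixes f :: "'a::topological_space \<Rightarrow> complex"
  assumes "connected J" "continuous_on J f" "y \<in> J" "x \<in> J"
    and close: "\<And>z. z \<in> J \<Longrightarrow> norm ((f z)\<^sup>2 - (f y)\<^sup>2) < (norm (f y))\<^sup>2"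
  shows "norm (f x - f y) < norm (f y)"
proof -
  define b where "b = f y"
  have factor: "norm (u - b) * norm (u + b) = norm (u\<^sup>2 - b\<^sup>2)" for u
    by (simp add: power2_eq_square algebra_simps flip: norm_mult)
  have cover: "f ` J \<subseteq> ball b (norm b) \<union> ball (-b) (norm b)"
  proof
    fix u assume "u \<in> f ` J"
    then have "norm (u - b) * norm (u + b) < norm b * norm b"
      using close factor unfolding b_def by (auto simp: power2_eq_square)
    then have "norm (u - b) < norm b \<or> norm (u + b) < norm b"
      by (meson mult_mono norm_ge_zero not_le)
    then show "u \<in> ball b (norm b) \<union> ball (-b) (norm b)"
      by (auto simp: dist_norm norm_minus_commute add.commute)
  qed
  have disjoint: "ball b (norm b) \<inter> ball (-b) (norm b) \<inter> f ` J = {}"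
  proof -
    have "\<not> (dist b u < norm b \<and> dist (-b) u < norm b)" for u
    proof
      assume "dist b u < norm b \<and> dist (-b) u < norm b"
      moreover have "dist b u = norm (u - b)" "dist (-b) u = norm (u + b)"
        by (simp_all add: dist_norm norm_minus_commute flip: diff_minus_eq_add)
      moreover have "norm (2 * b) \<le> norm (u - b) + norm (u + b)"
        using norm_triangle_ineq4[of "u + b" "u - b"] by (simp add: norm_minus_commute)
      ultimately show False by (simp add: norm_mult)
    qed
    then show ?thesis by auto
  qed
  have "b \<in> ball b (norm b) \<inter> f ` J"
    using close[OF assms(3)] assms(3) unfolding b_def by auto
  then have "ball (-b) (norm b) \<inter> f ` J = {}"
    using connectedD[OF connected_continuous_image[OF assms(2,1)] open_ball open_ball disjoint cover]
    by blast
  then have "f x \<in> ball b (norm b)"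
    using cover assms(4) by blast
  then show ?thesis
    unfolding b_def by (simp add: dist_norm norm_minus_commute)
qed

lemma connected_square_root_diff_le:
  fixes f :: "'a::topological_space \<Rightarrow> complex"
  assumes "connected J" "continuous_on J f" "y \<in> J" "x \<in> J"
    and "\<And>z. z \<in> J \<Longrightarrow> norm ((f z)\<^sup>2 - (f y)\<^sup>2) < (norm (f y))\<^sup>2"
  shows "norm (f x - f y) * norm (f y) \<le> norm ((f x)\<^sup>2 - (f y)\<^sup>2)"
proof -
  have lt: "norm (f x - f y) < norm (f y)"
    by (rule connected_square_root_branch[OF assms])
  have "norm (2 * f y) \<le> norm (f x + f y) + norm (f x - f y)"
    using norm_triangle_ineq4[of "f x + f y" "f x - f y"] by simp
  then have "norm (f y) \<le> norm (f x + f y)"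
    using lt by (simp add: norm_mult)
  then have "norm (f x - f y) * norm (f y) \<le> norm (f x - f y) * norm (f x + f y)"
    by (intro mult_left_mono) auto
  also have "\<dots> = norm ((f x)\<^sup>2 - (f y)\<^sup>2)"
    by (simp add: power2_eq_square algebra_simps flip: norm_mult)
  finally show ?thesis .
qed

lemma bounded_turning_square_root_branch:
  fixes v :: "complex \<Rightarrow> complex"
  assumes turning: "bounded_turning K S" and K: "0 < K"
    and bounded: "\<And>\<tau>. \<tau> \<in> S \<Longrightarrow> norm \<tau> \<le> R" and R: "0 < R"
    and cont: "continuous_on (S - {1, -1}) v" and square: "\<And>\<tau>. \<tau> \<in> S \<Longrightarrow> (v \<tau>)\<^sup>2 = \<tau>\<^sup>2 - 1"
    and \<tau>: "\<tau>1 \<in> S" "\<tau>2 \<in> S" and near: "norm (\<tau>1 - \<tau>2) < 1 / (8 * R * K) * norm (\<tau>2\<^sup>2 - 1)"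
  shows "norm (v \<tau>1 - v \<tau>2) * norm (v \<tau>2) \<le> norm (\<tau>1\<^sup>2 - \<tau>2\<^sup>2)"
proof -
  obtain J where J: "connected J" "J \<subseteq> S" "\<tau>1 \<in> J" "\<tau>2 \<in> J"
      "\<And>z. z \<in> J \<Longrightarrow> dist z \<tau>2 \<le> K * dist \<tau>1 \<tau>2"
    using turning \<tau> unfolding bounded_turning_def by meson
  have close: "norm (z\<^sup>2 - \<tau>2\<^sup>2) < norm (\<tau>2\<^sup>2 - 1) / 4" if "z \<in> J" for z
  proof -
    have "norm (z\<^sup>2 - \<tau>2\<^sup>2) \<le> 2 * R * norm (z - \<tau>2)"
      using norm_power2_diff_le[OF bounded bounded, of z \<tau>2] J(2) that \<tau>(2) by blast
    also have "\<dots> \<le> 2 * R * (K * norm (\<tau>1 - \<tau>2))"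
      using J(5)[OF that] R by (intro mult_left_mono) (auto simp: dist_norm)
    also have "\<dots> < 2 * R * (K * (1 / (8 * R * K) * norm (\<tau>2\<^sup>2 - 1)))"
      using near R K by (intro mult_strict_left_mono) auto
    also have "\<dots> = norm (\<tau>2\<^sup>2 - 1) / 4"
      using R K by (simp add: field_simps)
    finally show ?thesis .
  qed
  have "J \<subseteq> S - {1, -1}"
  proof
    fix z assume "z \<in> J"
    have "z\<^sup>2 \<noteq> 1"
    proof
      assume "z\<^sup>2 = 1"
      then have "norm (z\<^sup>2 - \<tau>2\<^sup>2) = norm (\<tau>2\<^sup>2 - 1)"
        by (simp add: norm_minus_commute)
      then show False
        using close[OF \<open>z \<in> J\<close>] norm_ge_zero[of "\<tau>2\<^sup>2 - 1"] by linarith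
    qed
    then show "z \<in> S - {1, -1}"
      using J(2) \<open>z \<in> J\<close> by auto
  qed
  then have "continuous_on J v"
    using cont continuous_on_subset by blast
  moreover have "norm ((v z)\<^sup>2 - (v \<tau>2)\<^sup>2) < (norm (v \<tau>2))\<^sup>2" if "z \<in> J" for z
  proof -
    have "(v z)\<^sup>2 - (v \<tau>2)\<^sup>2 = z\<^sup>2 - \<tau>2\<^sup>2" "(norm (v \<tau>2))\<^sup>2 = norm (\<tau>2\<^sup>2 - 1)"
      using square J(2) that \<tau>(2) by (auto simp flip: norm_power)
    moreover have "norm (z\<^sup>2 - \<tau>2\<^sup>2) < norm (\<tau>2\<^sup>2 - 1)"
      using close[OF that] norm_ge_zero[of "z\<^sup>2 - \<tau>2\<^sup>2"] by linarith
    ultimately show ?thesis by simp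
  qed
  ultimately have "norm (v \<tau>1 - v \<tau>2) * norm (v \<tau>2) \<le> norm ((v \<tau>1)\<^sup>2 - (v \<tau>2)\<^sup>2)"
    using connected_square_root_diff_le[OF J(1) _ J(4,3)] by blast
  then show ?thesis
    using square[OF \<tau>(1)] square[OF \<tau>(2)] by simp
qed

section \<open>Smooth Jordan curves\<close>

locale smooth_jordan_curve =
  fixes g :: "real \<Rightarrow> complex"
  assumes smooth: "smooth_jordan_param g"
begin

lemma periodic_nat: "g (t + real n) = g t"
proof (induction n arbitrary: t)
  case (Suc n)
  have "g (t + real (Suc n)) = g ((t + real n) + 1)" by (simp add: algebra_simps)
  also have "\<dots> = g (t + real n)" using smooth unfolding smooth_jordan_param_def by blast
  finally show ?case using Suc by simp
qed simp

lemma periodic: "g (t + of_int k) = g t"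
proof (cases "0 \<le> k")
  case True
  then show ?thesis using periodic_nat[of t "nat k"] by simp
next
  case False
  have "g (t + of_int k) = g ((t + of_int k) + real (nat (-k)))"
    using periodic_nat by simp
  also have "\<dots> = g t" using False by simp
  finally show ?thesis .
qed

lemma frac_eq: "g (frac t) = g t"
  using periodic[of "frac t" "\<lfloor>t\<rfloor>"] unfolding frac_def by simp

lemma eq_imp_int_shift: assumes "g s = g s'" shows "\<exists>k::int. s' = s + k"
proof -
  have "inj_on g {0..<1}" using smooth unfolding smooth_jordan_param_def by blast
  moreover have "g (frac s) = g (frac s')" using assms frac_eq by simp
  ultimately have "frac s = frac s'" by (auto simp: frac_lt_1 inj_on_eq_iff)
  then have "s' = s + of_int (\<lfloor>s'\<rfloor> - \<lfloor>s\<rfloor>)" by (simp add: frac_def)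
  then show ?thesis by blast
qed

lemma eq_imp_eq_if_close: assumes "g s = g s'" "\<bar>s - s'\<bar> < 1" shows "s = s'"
proof -
  obtain k :: int where k: "s' = s + k" using eq_imp_int_shift assms(1) by blast
  then have "\<bar>real_of_int k\<bar> < 1" using assms(2) by simp
  then show ?thesis using k by simp
qed

lemma derivativeE:
  obtains g' where "\<And>t. (g has_vector_derivative g' t) (at t)" "continuous_on UNIV g'" "\<And>t. g' t \<noteq> 0"
proof -
  obtain D :: "nat \<Rightarrow> real \<Rightarrow> complex" where D: "D 0 = g"
      "\<And>n t. (D n has_vector_derivative D (Suc n) t) (at t)" "\<And>t. D 1 t \<noteq> 0"
    using smooth unfolding smooth_jordan_param_def by blast
  have "continuous_on UNIV (D 1)"
    using D(2)[of 1] by (meson continuous_at_imp_continuous_on has_vector_derivative_continuous)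
  moreover have "(g has_vector_derivative D 1 t) (at t)" for t
    using D(2)[of 0 t] D(1) by simp
  ultimately show thesis
    using that D(3) by blast
qed

lemma isCont_curve: "isCont g t"
  using derivativeE by (metis has_vector_derivative_continuous)

lemma continuous_on_curve: "continuous_on S g"
  by (simp add: continuous_at_imp_continuous_on isCont_curve)

lemma in_path_image: "g t \<in> path_image g"
  using frac_eq[of t] frac_ge_0[of t] frac_lt_1[of t] unfolding path_image_def
  by (metis atLeastAtMost_iff image_eqI less_imp_le)

lemma path_image_eq: "path_image g = g ` {a..a+1}"
proof
  show "path_image g \<subseteq> g ` {a..a+1}"
  proof
    fix z assume "z \<in> path_image g"
    then obtain s where s: "z = g s" by (auto simp: path_image_def)
    have "s + \<lceil>a - s\<rceil> \<in> {a..a+1}" by (auto, linarith+)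
    moreover have "g (s + \<lceil>a - s\<rceil>) = z" using periodic s by simp
    ultimately show "z \<in> g ` {a..a+1}" by force
  qed
qed (use in_path_image in blast)

lemma simple_loop: "simple_path g" "pathfinish g = pathstart g"
proof -
  show "pathfinish g = pathstart g"
    using periodic_nat[of 0 1] by (simp add: pathfinish_def pathstart_def)
  have "loop_free g"
    unfolding loop_free_def
  proof (intro ballI impI)
    fix x y assume xy: "x \<in> {0..1}" "y \<in> {0..1}" "g x = g y"
    obtain k :: int where k: "y = x + k" using eq_imp_int_shift xy(3) by blast
    then have "\<bar>real_of_int k\<bar> \<le> 1" using xy by auto
    then have "k = 0 \<or> k = 1 \<or> k = -1" by linarith
    then show "x = y \<or> x = 0 \<and> y = 1 \<or> x = 1 \<and> y = 0" using k xy by auto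
  qed
  then show "simple_path g" by (simp add: simple_path_def path_def continuous_on_curve)
qed

lemma lipschitz_on_interval: "\<exists>L>0. \<forall>s\<in>{a..b}. \<forall>s'\<in>{a..b}. norm (g s - g s') \<le> L * \<bar>s - s'\<bar>"
proof -
  obtain g' where g': "\<And>t. (g has_vector_derivative g' t) (at t)" "continuous_on UNIV g'"
    using derivativeE by blast
  have "compact (g' ` {a..b})"
    by (intro compact_continuous_image continuous_on_subset[OF g'(2)]) auto
  then obtain L0 where L0: "\<forall>x\<in>g' ` {a..b}. norm x \<le> L0" using compact_imp_bounded bounded_iff by metis
  have "norm (g s - g s') \<le> max L0 1 * \<bar>s - s'\<bar>" if "s \<in> {a..b}" "s' \<in> {a..b}" for s s'
  proof (rule norm_diff_le_vector_derivative_bound[OF _ g'(1)])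
    show "norm (g' x) \<le> max L0 1" if "x \<in> {a..b}" for x
      using L0 that by (meson imageI max.coboundedI1)
  qed (use that in simp_all)
  moreover have "0 < max L0 1" by simp
  ultimately show ?thesis by blast
qed

lemma chord_lower_near:
  obtains \<eta> m where "0 < \<eta>" "0 < m"
    "\<And>s s'. \<bar>s - a\<bar> < \<eta> \<Longrightarrow> \<bar>s' - a\<bar> < \<eta> \<Longrightarrow> m * \<bar>s - s'\<bar> \<le> norm (g s - g s')"
proof -
  obtain g' where g': "\<And>t. (g has_vector_derivative g' t) (at t)" "continuous_on UNIV g'" "\<And>t. g' t \<noteq> 0"
    using derivativeE by blast
  define m where "m = norm (g' a) / 2"
  have m: "0 < m" using g'(3) unfolding m_def by simp
  have "isCont g' a" using g'(2) by (simp add: continuous_on_eq_continuous_at)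
  then obtain \<eta> where \<eta>: "0 < \<eta>" "\<And>s. dist s a < \<eta> \<Longrightarrow> dist (g' s) (g' a) < m"
    using m unfolding continuous_at_eps_delta by blast
  show thesis
  proof (rule that[OF \<eta>(1) m])
    fix s s' assume s: "\<bar>s - a\<bar> < \<eta>" "\<bar>s' - a\<bar> < \<eta>"
    have lin: "norm ((g s - s *\<^sub>R g' a) - (g s' - s' *\<^sub>R g' a)) \<le> m * \<bar>s - s'\<bar>"
    proof (rule norm_diff_le_vector_derivative_bound[of "ball a \<eta>" _ "\<lambda>s. g' s - g' a"])
      show "((\<lambda>s. g s - s *\<^sub>R g' a) has_vector_derivative g' x - g' a) (at x)" for x
        using g'(1)[of x] by (auto intro!: derivative_eq_intros)
      show "norm (g' x - g' a) \<le> m" if "x \<in> ball a \<eta>" for x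
      proof -
        have "dist x a < \<eta>" using that by (simp add: dist_commute)
        then show ?thesis using \<eta>(2)[of x] by (simp add: dist_norm)
      qed
    qed (use s in \<open>auto simp: dist_real_def abs_minus_commute\<close>)
    have "(g s - s *\<^sub>R g' a) - (g s' - s' *\<^sub>R g' a) = (g s - g s') - (s - s') *\<^sub>R g' a"
      by (simp add: algebra_simps)
    then have "norm ((g s - g s') - (s - s') *\<^sub>R g' a) \<le> m * \<bar>s - s'\<bar>"
      using lin by metis
    moreover have "norm ((s - s') *\<^sub>R g' a) = 2 * m * \<bar>s - s'\<bar>"
      unfolding m_def by simp
    moreover have "norm ((s - s') *\<^sub>R g' a) \<le> norm (g s - g s') + norm ((g s - g s') - (s - s') *\<^sub>R g' a)"
      using norm_triangle_ineq4[of "g s - g s'" "(g s - g s') - (s - s') *\<^sub>R g' a"] by simp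
    ultimately show "m * \<bar>s - s'\<bar> \<le> norm (g s - g s')"
      by linarith
  qed
qed

lemma eventually_chord_lower:
  assumes "u \<longlonglongrightarrow> a" "v \<longlonglongrightarrow> a"
  obtains m where "0 < m" "\<forall>\<^sub>F n in sequentially. m * \<bar>u n - v n\<bar> \<le> norm (g (u n) - g (v n))"
proof -
  obtain \<eta> m where \<eta>m: "0 < \<eta>" "0 < m"
    "\<And>s s'. \<bar>s - a\<bar> < \<eta> \<Longrightarrow> \<bar>s' - a\<bar> < \<eta> \<Longrightarrow> m * \<bar>s - s'\<bar> \<le> norm (g s - g s')"
    using chord_lower_near by blast
  have "\<forall>\<^sub>F n in sequentially. \<bar>u n - a\<bar> < \<eta>" "\<forall>\<^sub>F n in sequentially. \<bar>v n - a\<bar> < \<eta>"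
    using assms \<eta>m(1) unfolding tendsto_iff dist_real_def by blast+
  then have "\<forall>\<^sub>F n in sequentially. m * \<bar>u n - v n\<bar> \<le> norm (g (u n) - g (v n))"
    by eventually_elim (rule \<eta>m(3))
  then show thesis
    using that \<eta>m(2) by blast
qed

lemma eq_if_chords_vanish:
  assumes "u \<longlonglongrightarrow> a" "v \<longlonglongrightarrow> b" "\<And>n. \<bar>u n - v n\<bar> \<le> 1/2"
    "\<And>n. norm (g (u n) - g (v n)) \<le> \<epsilon> n" "\<epsilon> \<longlonglongrightarrow> 0"
  shows "a = b"
proof -
  have "(\<lambda>n. norm (g (u n) - g (v n))) \<longlonglongrightarrow> norm (g a - g b)"
    by (intro tendsto_intros isCont_tendsto_compose[OF isCont_curve assms(1)]
        isCont_tendsto_compose[OF isCont_curve assms(2)])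
  then have "norm (g a - g b) \<le> 0"
    using LIMSEQ_le[OF _ assms(5)] assms(4) by blast
  moreover have "\<bar>a - b\<bar> \<le> 1/2"
    by (rule LIMSEQ_le_const2[OF tendsto_rabs[OF tendsto_diff[OF assms(1,2)]]]) (use assms(3) in auto)
  ultimately show ?thesis
    using eq_imp_eq_if_close by simp
qed

lemma chord_lower:
  obtains c where "0 < c"
    "\<And>s1 s2. s1 \<in> {0..1} \<Longrightarrow> \<bar>s1 - s2\<bar> \<le> 1/2 \<Longrightarrow> c * \<bar>s1 - s2\<bar> \<le> norm (g s1 - g s2)"
proof (rule ccontr)
  assume contra: "\<not> thesis"
  have "\<exists>p. p \<in> {0..1} \<times> {-1..2} \<and> \<bar>fst p - snd p\<bar> \<le> 1/2 \<and>
      norm (g (fst p) - g (snd p)) < inverse (real (Suc n)) * \<bar>fst p - snd p\<bar>" for n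
  proof -
    have "\<not> (\<forall>s1 s2. s1 \<in> {0..1} \<longrightarrow> \<bar>s1 - s2\<bar> \<le> 1/2 \<longrightarrow>
        inverse (real (Suc n)) * \<bar>s1 - s2\<bar> \<le> norm (g s1 - g s2))"
      using that[of "inverse (real (Suc n))"] contra by auto
    then obtain s1 s2 where "s1 \<in> {0..1}" "\<bar>s1 - s2\<bar> \<le> 1/2"
        "norm (g s1 - g s2) < inverse (real (Suc n)) * \<bar>s1 - s2\<bar>"
      by (auto simp: not_le)
    moreover have "s2 \<in> {-1..2}" using calculation(1,2) by (auto simp: abs_if split: if_splits)
    ultimately show ?thesis by (intro exI[of _ "(s1, s2)"]) auto
  qed
  then obtain X where "\<forall>n. X n \<in> {0..1} \<times> {-1..2} \<and> \<bar>fst (X n) - snd (X n)\<bar> \<le> 1/2 \<and>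
      norm (g (fst (X n)) - g (snd (X n))) < inverse (real (Suc n)) * \<bar>fst (X n) - snd (X n)\<bar>"
    using choice[of "\<lambda>n p. p \<in> {0..1} \<times> {-1..2} \<and> \<bar>fst p - snd p\<bar> \<le> 1/2 \<and>
      norm (g (fst p) - g (snd p)) < inverse (real (Suc n)) * \<bar>fst p - snd p\<bar>"] by blast
  then have X: "\<And>n. X n \<in> {0..1} \<times> {-1..2}" "\<And>n. \<bar>fst (X n) - snd (X n)\<bar> \<le> 1/2"
      "\<And>n. norm (g (fst (X n)) - g (snd (X n))) < inverse (real (Suc n)) * \<bar>fst (X n) - snd (X n)\<bar>"
    by simp_all
  obtain p r where p: "strict_mono r" "(X \<circ> r) \<longlonglongrightarrow> p"
    using compact_imp_seq_compact[OF compact_Times[OF compact_Icc compact_Icc]] X(1)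
    unfolding seq_compact_def by metis
  define a b where "a = fst p" and "b = snd p"
  have lim: "(\<lambda>n. fst (X (r n))) \<longlonglongrightarrow> a" "(\<lambda>n. snd (X (r n))) \<longlonglongrightarrow> b"
    using tendsto_fst[OF p(2)] tendsto_snd[OF p(2)] unfolding a_def b_def by (simp_all add: o_def)
  have inv0: "(\<lambda>n. inverse (real (Suc (r n)))) \<longlonglongrightarrow> 0"
    using LIMSEQ_subseq_LIMSEQ[OF LIMSEQ_inverse_real_of_nat p(1)] by (simp add: o_def)
  have "norm (g (fst (X (r n))) - g (snd (X (r n)))) \<le> inverse (real (Suc (r n))) * (1/2)" for n
  proof -
    have "inverse (real (Suc (r n))) * \<bar>fst (X (r n)) - snd (X (r n))\<bar> \<le> inverse (real (Suc (r n))) * (1/2)"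
      using X(2) by (intro mult_left_mono) auto
    then show ?thesis using X(3)[of "r n"] by linarith
  qed
  moreover have "(\<lambda>n. inverse (real (Suc (r n))) * (1/2)) \<longlonglongrightarrow> 0"
    using tendsto_mult_left_zero[OF inv0] .
  ultimately have "a = b"
    by (rule eq_if_chords_vanish[OF lim X(2)])
  obtain m where m: "0 < m"
    "\<forall>\<^sub>F n in sequentially. m * \<bar>fst (X (r n)) - snd (X (r n))\<bar> \<le> norm (g (fst (X (r n))) - g (snd (X (r n))))"
    using eventually_chord_lower[OF lim(1) lim(2)[folded \<open>a = b\<close>]] by blast
  moreover have "\<forall>\<^sub>F n in sequentially. inverse (real (Suc (r n))) < m"
    using order_tendstoD(2)[OF inv0 m(1)] .
  ultimately obtain n where n: "m * \<bar>fst (X (r n)) - snd (X (r n))\<bar> \<le> norm (g (fst (X (r n))) - g (snd (X (r n))))"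
      "inverse (real (Suc (r n))) < m"
    using eventually_happens'[OF sequentially_bot eventually_conj] by blast
  have "inverse (real (Suc (r n))) * \<bar>fst (X (r n)) - snd (X (r n))\<bar> \<le> m * \<bar>fst (X (r n)) - snd (X (r n))\<bar>"
    using n(2) by (intro mult_right_mono) auto
  then show False
    using n(1) X(3)[of "r n"] by linarith
qed

lemma path_image_eq_centred: "path_image g = g ` {a - 1/2 .. a + 1/2}"
  using path_image_eq[of "a - 1/2"] by (simp add: add.commute)

lemma bounded_turning_path_image:
  obtains K where "0 < K" "bounded_turning K (path_image g)"
proof -
  obtain c where c: "0 < c"
      "\<And>s1 s2. s1 \<in> {0..1} \<Longrightarrow> \<bar>s1 - s2\<bar> \<le> 1/2 \<Longrightarrow> c * \<bar>s1 - s2\<bar> \<le> norm (g s1 - g s2)"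
    using chord_lower by blast
  obtain L where L: "0 < L" "\<forall>s\<in>{-1..2}. \<forall>s'\<in>{-1..2}. norm (g s - g s') \<le> L * \<bar>s - s'\<bar>"
    using lipschitz_on_interval by blast
  have "bounded_turning (L / c) (path_image g)"
    unfolding bounded_turning_def
  proof (intro ballI)
    fix \<tau>1 \<tau>2 assume \<tau>: "\<tau>1 \<in> path_image g" "\<tau>2 \<in> path_image g"
    then obtain s1 where s1: "s1 \<in> {0..1}" "\<tau>1 = g s1"
      by (auto simp: path_image_def)
    obtain s2 where s2: "s2 \<in> {s1 - 1/2 .. s1 + 1/2}" "\<tau>2 = g s2"
      using \<tau>(2) path_image_eq_centred[of s1] by auto
    \<comment> \<open>the shorter of the two arcs of the curve between \<open>\<tau>1\<close> and \<open>\<tau>2\<close>\<close>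
    define J where "J = g ` {min s1 s2 .. max s1 s2}"
    have "connected J"
      unfolding J_def by (intro connected_continuous_image connected_Icc continuous_on_curve)
    moreover have "J \<subseteq> path_image g" "\<tau>1 \<in> J" "\<tau>2 \<in> J"
      unfolding J_def using s1 s2 in_path_image by auto
    moreover have "dist \<tau> \<tau>2 \<le> L / c * dist \<tau>1 \<tau>2" if "\<tau> \<in> J" for \<tau>
    proof -
      obtain s where s: "s \<in> {min s1 s2 .. max s1 s2}" "\<tau> = g s" using \<open>\<tau> \<in> J\<close> unfolding J_def by auto
      have "s \<in> {-1..2}" "s2 \<in> {-1..2}"
        using s(1) s1(1) s2(1) by auto
      then have "dist \<tau> \<tau>2 \<le> L * \<bar>s - s2\<bar>"
        using L(2) s(2) s2(2) by (simp add: dist_norm)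
      also have "\<dots> \<le> L * \<bar>s1 - s2\<bar>"
        using s(1) L(1) by (intro mult_left_mono) (auto simp: abs_le_iff)
      also have "\<dots> = L / c * (c * \<bar>s1 - s2\<bar>)"
        using c(1) by simp
      also have "\<dots> \<le> L / c * dist \<tau>1 \<tau>2"
      proof -
        have "\<bar>s1 - s2\<bar> \<le> 1/2" using s2(1) by (auto simp: abs_if)
        then show ?thesis
          using c s1 s2(2) L(1) by (intro mult_left_mono) (auto simp: dist_norm)
      qed
      finally show ?thesis .
    qed
    ultimately show "\<exists>J. connected J \<and> J \<subseteq> path_image g \<and> \<tau>1 \<in> J \<and> \<tau>2 \<in> J \<and>
        (\<forall>z\<in>J. dist z \<tau>2 \<le> L / c * dist \<tau>1 \<tau>2)"
      by blast
  qed
  then show thesis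
    using that[of "L / c"] L(1) c(1) by simp
qed

lemma path_image_near_point:
  assumes "0 < \<epsilon>"
  obtains \<delta> where "0 < \<delta>"
    "\<And>\<tau>. \<tau> \<in> path_image g \<Longrightarrow> dist \<tau> (g s0) < \<delta> \<Longrightarrow> \<exists>s. \<bar>s - s0\<bar> < \<epsilon> \<and> g s = \<tau>"
proof -
  define K where "K = {s0 - 1/2 .. s0 + 1/2}"
  have "path_image g = g ` K"
    unfolding K_def by (rule path_image_eq_centred)
  moreover have "s = s0" if "s \<in> K" "g s = g s0" for s
    using eq_imp_eq_if_close[of s s0] that unfolding K_def by auto
  then obtain \<delta> where "0 < \<delta>" "\<And>s. s \<in> K \<Longrightarrow> dist (g s) (g s0) < \<delta> \<Longrightarrow> dist s s0 < \<epsilon>"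
    using compact_continuous_inverse_at[of K g s0 \<epsilon>] continuous_on_curve assms unfolding K_def by auto
  ultimately show thesis
    using that[of \<delta>] by (fastforce simp: dist_real_def)
qed

end

section \<open>Boundary values of the square root\<close>

locale sqrt_boundary_values = smooth_jordan_curve g
  for g :: "real \<Rightarrow> complex" +
  fixes F w wb :: "complex \<Rightarrow> complex"
  assumes analytic: "analytic_arc F"
    and arc_ends: "F 0 = -1" "F 1 = 1"
    and contains: "arc_image F \<subseteq> path_image g"
    and left: "\<forall>t\<in>{0<..<1}. \<forall>\<^sub>F e in at_right (0::real).
                 F (complex_of_real t) + complex_of_real e * \<i> * deriv F (complex_of_real t)
                   \<in> inside (path_image g)"
    and w_hol: "w holomorphic_on (- arc_image F)"
    and w_square: "\<forall>z\<in>- arc_image F. (w z)\<^sup>2 = z\<^sup>2 - 1"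
    and wb: "\<forall>\<tau>\<in>path_image g. (w \<longlongrightarrow> wb \<tau>) (at \<tau> within inside (path_image g))"
begin

abbreviation Fr :: "real \<Rightarrow> complex" where "Fr t \<equiv> F (complex_of_real t)"

lemma analytic_arcE:
  obtains U where "open U" "complex_of_real ` {0..1} \<subseteq> U" "F holomorphic_on U"
    "inj_on F (complex_of_real ` {0..1})" "\<And>t. t \<in> {0..1} \<Longrightarrow> deriv F (complex_of_real t) \<noteq> 0"
  using analytic unfolding analytic_arc_def by blast

lemma continuous_on_Fr: "continuous_on {0..1} Fr"
proof -
  obtain U where U: "complex_of_real ` {0..1} \<subseteq> U" "F holomorphic_on U"
    using analytic_arcE by metis
  show ?thesis
    using continuous_on_compose2[OF holomorphic_on_imp_continuous_on[OF U(2)] _ U(1)]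
    by (simp add: continuous_intros)
qed

lemma inj_on_Fr: "inj_on Fr {0..1}"
proof -
  obtain U where "inj_on F (complex_of_real ` {0..1})"
    using analytic_arcE by metis
  then show ?thesis
    unfolding inj_on_def by auto
qed

lemma arc_image_eq: "arc_image F = Fr ` {0..1}"
  unfolding arc_image_def by auto

lemma compact_arc_image: "compact (arc_image F)"
  unfolding arc_image_eq by (intro compact_continuous_image continuous_on_Fr compact_Icc)

lemma open_arc_complement: "open (- arc_image F)"
  using compact_arc_image compact_imp_closed by blast

lemma Fr_interior_not_ends: assumes "t \<in> {0<..<1}" shows "Fr t \<noteq> 1" "Fr t \<noteq> -1"
proof -
  have "t \<in> {0..1}" "t \<noteq> 0" "t \<noteq> 1" using assms by auto
  moreover have "(0::real) \<in> {0..1}" "(1::real) \<in> {0..1}" by auto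
  ultimately show "Fr t \<noteq> 1" "Fr t \<noteq> -1"
    using inj_on_Fr arc_ends unfolding inj_on_def by (metis of_real_0 of_real_1)+
qed

lemma ends_in_path_image: "1 \<in> path_image g" "-1 \<in> path_image g"
  using contains arc_ends unfolding arc_image_def by force+

lemma inside_disjoint: "inside (path_image g) \<inter> path_image g = {}"
  by (rule inside_no_overlap)

lemma islimpt_inside: assumes "\<tau> \<in> path_image g" shows "\<tau> islimpt inside (path_image g)"
proof -
  have "frontier (inside (path_image g)) = path_image g"
    using Jordan_inside_outside[OF simple_loop] by blast
  then have "\<tau> \<in> closure (inside (path_image g))"
    using assms unfolding frontier_def by blast
  moreover have "\<tau> \<notin> inside (path_image g)"
    using assms inside_disjoint by blast
  ultimately show ?thesis
    by (simp add: closure_def)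
qed

lemma wb_square: assumes "\<tau> \<in> path_image g" shows "(wb \<tau>)\<^sup>2 = \<tau>\<^sup>2 - 1"
proof -
  have nontriv: "at \<tau> within inside (path_image g) \<noteq> bot"
    using islimpt_inside[OF assms] by (simp add: trivial_limit_within)
  have "((\<lambda>z. (w z)\<^sup>2) \<longlongrightarrow> (wb \<tau>)\<^sup>2) (at \<tau> within inside (path_image g))"
    using wb assms by (auto intro!: tendsto_intros)
  moreover have "\<forall>\<^sub>F z in at \<tau> within inside (path_image g). (w z)\<^sup>2 = z\<^sup>2 - 1"
  proof -
    have "inside (path_image g) \<subseteq> - arc_image F"
      using inside_disjoint contains by blast
    then show ?thesis
      using w_square unfolding eventually_at_filter by (intro always_eventually) blast
  qed
  ultimately have "((\<lambda>z. z\<^sup>2 - 1) \<longlongrightarrow> (wb \<tau>)\<^sup>2) (at \<tau> within inside (path_image g))"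
    by (rule Lim_transform_eventually)
  moreover have "((\<lambda>z. z\<^sup>2 - 1) \<longlongrightarrow> \<tau>\<^sup>2 - 1) (at \<tau> within inside (path_image g))"
    by (intro tendsto_eq_intros) auto
  ultimately show ?thesis
    using nontriv tendsto_unique by blast
qed

lemma wb_eq_w: assumes "\<tau> \<in> path_image g" "\<tau> \<notin> arc_image F" shows "wb \<tau> = w \<tau>"
proof -
  have "isCont w \<tau>"
    using holomorphic_on_imp_continuous_on[OF w_hol] open_arc_complement assms(2)
      continuous_on_eq_continuous_at by blast
  then have "(w \<longlongrightarrow> w \<tau>) (at \<tau> within inside (path_image g))"
    using continuous_at_imp_continuous_within unfolding continuous_within by blast
  moreover have "at \<tau> within inside (path_image g) \<noteq> bot"
    using islimpt_inside[OF assms(1)] by (simp add: trivial_limit_within)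
  ultimately show ?thesis
    using wb assms(1) tendsto_unique by blast
qed

lemma arc_near_in_chart:
  assumes t0: "t0 \<in> {0<..<1}" and s0: "g s0 = Fr t0"
  obtains I where "open I" "t0 \<in> I" "I \<subseteq> {0..1}" "Fr ` I \<subseteq> g ` {s0 - 1/4 .. s0 + 1/4}"
proof -
  obtain \<delta> where \<delta>: "0 < \<delta>"
      "\<And>\<tau>. \<tau> \<in> path_image g \<Longrightarrow> dist \<tau> (g s0) < \<delta> \<Longrightarrow> \<exists>s. \<bar>s - s0\<bar> < 1/4 \<and> g s = \<tau>"
    using path_image_near_point[of "1/4" s0] by auto
  obtain \<eta> where \<eta>: "0 < \<eta>" "\<And>t. t \<in> {0..1} \<Longrightarrow> dist t t0 < \<eta> \<Longrightarrow> dist (Fr t) (Fr t0) < \<delta>"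
  proof -
    have "t0 \<in> {0..1}" using t0 by auto
    then show ?thesis
      using continuous_on_Fr \<delta>(1) that unfolding continuous_on_iff by blast
  qed
  define I where "I = ball t0 (min \<eta> (min t0 (1 - t0)))"
  have I01: "I \<subseteq> {0..1}"
    unfolding I_def by (auto simp: dist_real_def)
  have FrI: "Fr ` I \<subseteq> g ` {s0 - 1/4 .. s0 + 1/4}"
  proof
    fix \<tau> assume "\<tau> \<in> Fr ` I"
    then obtain t where t: "t \<in> I" "\<tau> = Fr t" by blast
    have "t \<in> {0..1}" "dist t t0 < \<eta>"
      using t(1) I01 unfolding I_def by (auto simp: dist_commute)
    then have "\<tau> \<in> path_image g" "dist \<tau> (g s0) < \<delta>"
      using \<eta>(2)[of t] contains s0 t(2) unfolding arc_image_def by auto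
    then obtain s where "\<bar>s - s0\<bar> < 1/4" "g s = \<tau>"
      using \<delta>(2) by blast
    then show "\<tau> \<in> g ` {s0 - 1/4 .. s0 + 1/4}"
      by (auto simp: abs_if split: if_splits)
  qed
  moreover have "t0 \<in> I"
    using \<eta>(1) t0 unfolding I_def by simp
  ultimately show thesis
    using that[OF _ _ I01] unfolding I_def by simp
qed

text \<open>The arc, read in the parameter of the curve, is a continuous injective map of an open
  interval, so its image is open by invariance of domain.\<close>

lemma arc_covers_curve_near:
  assumes t0: "t0 \<in> {0<..<1}" and s0: "g s0 = Fr t0"
  obtains \<kappa> where "0 < \<kappa>" "\<And>s. \<bar>s - s0\<bar> < \<kappa> \<Longrightarrow> g s \<in> arc_image F"
proof -
  define K where "K = {s0 - 1/4 .. s0 + 1/4}"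
  have "inj_on g K"
    using eq_imp_eq_if_close unfolding K_def by (intro inj_onI) auto
  then obtain h where h: "homeomorphism K (g ` K) g h"
    using homeomorphism_compact[of K g "g ` K"] continuous_on_curve unfolding K_def by blast
  obtain I where I: "open I" "t0 \<in> I" and I01: "I \<subseteq> {0..1}" and FrI: "Fr ` I \<subseteq> g ` K"
    using arc_near_in_chart[OF t0 s0] unfolding K_def by blast
  have "open ((h \<circ> Fr) ` I)"
  proof (rule invariance_of_domain)
    show "continuous_on I (h \<circ> Fr)"
      using continuous_on_compose continuous_on_subset[OF continuous_on_Fr I01]
        continuous_on_subset[OF homeomorphism_cont2[OF h] FrI] by blast
    show "inj_on (h \<circ> Fr) I"
    proof (rule inj_onI)
      fix x y assume "x \<in> I" "y \<in> I" "(h \<circ> Fr) x = (h \<circ> Fr) y"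
      then have "Fr x = Fr y"
        using homeomorphism_apply2[OF h] FrI by (metis comp_apply image_subset_iff)
      then show "x = y"
        using inj_on_Fr I01 \<open>x \<in> I\<close> \<open>y \<in> I\<close> unfolding inj_on_def by blast
    qed
  qed (rule I(1))
  moreover have "s0 \<in> (h \<circ> Fr) ` I"
  proof (rule image_eqI[OF _ I(2)])
    show "s0 = (h \<circ> Fr) t0"
      using homeomorphism_apply1[OF h, of s0] s0 unfolding K_def by simp
  qed
  ultimately obtain \<kappa> where \<kappa>: "0 < \<kappa>" "ball s0 \<kappa> \<subseteq> (h \<circ> Fr) ` I"
    using openE by blast
  show thesis
  proof (rule that[of "min \<kappa> (1/4)"])
    fix s assume s: "\<bar>s - s0\<bar> < min \<kappa> (1/4)"
    then have "s \<in> ball s0 \<kappa>"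
      by (simp add: dist_real_def abs_minus_commute)
    then obtain t where t: "t \<in> I" "s = h (Fr t)"
      using \<kappa>(2) by auto
    have "s \<in> K" using s unfolding K_def by (auto simp: abs_if split: if_splits)
    then have "g s = Fr t"
      using t FrI homeomorphism_apply2[OF h] by blast
    then show "g s \<in> arc_image F"
      using t(1) I01 unfolding arc_image_eq by auto
  qed (use \<kappa>(1) in simp)
qed

lemma path_image_near_arc:
  assumes t0: "t0 \<in> {0<..<1}"
  obtains r where "0 < r" "path_image g \<inter> ball (Fr t0) r \<subseteq> arc_image F"
proof -
  have "Fr t0 \<in> path_image g"
    using contains t0 unfolding arc_image_def by auto
  then obtain s0 where s0: "g s0 = Fr t0"
    unfolding path_image_def by auto
  obtain \<kappa> where \<kappa>: "0 < \<kappa>" "\<And>s. \<bar>s - s0\<bar> < \<kappa> \<Longrightarrow> g s \<in> arc_image F"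
    using arc_covers_curve_near[OF t0 s0] by blast
  obtain \<delta> where \<delta>: "0 < \<delta>"
      "\<And>\<tau>. \<tau> \<in> path_image g \<Longrightarrow> dist \<tau> (g s0) < \<delta> \<Longrightarrow> \<exists>s. \<bar>s - s0\<bar> < \<kappa> \<and> g s = \<tau>"
    using path_image_near_point[OF \<kappa>(1)] by blast
  show thesis
  proof (rule that[OF \<delta>(1)], intro subsetI)
    fix \<tau> assume "\<tau> \<in> path_image g \<inter> ball (Fr t0) \<delta>"
    then show "\<tau> \<in> arc_image F"
      using \<delta>(2) \<kappa>(2) s0 by (fastforce simp: dist_commute)
  qed
qed

lemma deriv_w_times_w: assumes "z \<notin> arc_image F" shows "deriv w z * w z = z"
proof -
  have z: "z \<in> - arc_image F" using assms by simp
  have "(w has_field_derivative deriv w z) (at z)"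
    using holomorphic_derivI[OF w_hol open_arc_complement z] .
  then have "((\<lambda>x. w x * w x) has_field_derivative 2 * (deriv w z * w z)) (at z)"
    by (auto intro!: derivative_eq_intros simp: algebra_simps)
  moreover have "((\<lambda>x. w x * w x) has_field_derivative 2 * z) (at z)"
  proof (rule has_field_derivative_transform_within_open[OF _ open_arc_complement z])
    show "((\<lambda>x. x * x - 1) has_field_derivative 2 * z) (at z)"
      by (auto intro!: derivative_eq_intros)
    show "x * x - 1 = w x * w x" if "x \<in> - arc_image F" for x
      using w_square that by (simp add: power2_eq_square)
  qed
  ultimately show ?thesis
    using DERIV_unique by fastforce
qed

lemma norm_deriv_w:
  assumes "z \<notin> arc_image F" shows "norm (deriv w z) = norm z / sqrt (norm (z\<^sup>2 - 1))"
proof -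
  have sq: "(w z)\<^sup>2 = z\<^sup>2 - 1"
    using w_square assms by auto
  then have "norm (w z) = sqrt (norm (z\<^sup>2 - 1))"
    by (metis norm_power real_sqrt_abs abs_norm_cancel)
  moreover have "w z \<noteq> 0"
  proof
    assume "w z = 0"
    then have "z = 0" using deriv_w_times_w[OF assms] by simp
    then show False using sq \<open>w z = 0\<close> by simp
  qed
  ultimately have "sqrt (norm (z\<^sup>2 - 1)) \<noteq> 0"
    by auto
  then show ?thesis
    using arg_cong[OF deriv_w_times_w[OF assms], of norm] \<open>norm (w z) = _\<close>
    by (simp add: norm_mult eq_divide_eq)
qed

lemma arc_preimage_real:
  assumes t0: "t0 \<in> {0..1}"
  obtains r where "0 < r" "\<And>\<zeta>. \<zeta> \<in> ball (complex_of_real t0) r \<Longrightarrow> F \<zeta> \<in> arc_image F \<Longrightarrow> Im \<zeta> = 0"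
proof -
  obtain U where U: "open U" "complex_of_real ` {0..1} \<subseteq> U" "F holomorphic_on U"
      "\<And>t. t \<in> {0..1} \<Longrightarrow> deriv F (complex_of_real t) \<noteq> 0"
    using analytic_arcE by metis
  have c0: "complex_of_real t0 \<in> U" using U(2) t0 by blast
  obtain r1 where r1: "0 < r1" "ball (complex_of_real t0) r1 \<subseteq> U" "inj_on F (ball (complex_of_real t0) r1)"
    using has_complex_derivative_locally_injective[OF U(3) c0 U(1) U(4)[OF t0]] by blast
  obtain \<delta> where \<delta>: "0 < \<delta>" "\<And>t. t \<in> {0..1} \<Longrightarrow> dist (Fr t) (Fr t0) < \<delta> \<Longrightarrow> dist t t0 < r1"
    using compact_continuous_inverse_at[OF compact_Icc continuous_on_Fr t0 _ r1(1)] inj_on_Fr t0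
    unfolding inj_on_def by metis
  have "isCont F (complex_of_real t0)"
    using holomorphic_on_imp_continuous_on[OF U(3)] U(1) c0 continuous_on_eq_continuous_at by blast
  then obtain e where e: "0 < e" "\<And>\<zeta>. dist \<zeta> (complex_of_real t0) < e \<Longrightarrow> dist (F \<zeta>) (Fr t0) < \<delta>"
    using \<delta>(1) unfolding continuous_at_eps_delta by blast
  show thesis
  proof (rule that[of "min r1 e"])
    fix \<zeta> assume \<zeta>: "\<zeta> \<in> ball (complex_of_real t0) (min r1 e)" "F \<zeta> \<in> arc_image F"
    then obtain t where t: "t \<in> {0..1}" "F \<zeta> = Fr t"
      unfolding arc_image_eq by auto
    then have "dist t t0 < r1"
      using \<delta>(2)[OF t(1)] e(2)[of \<zeta>] \<zeta>(1) by (auto simp: dist_commute)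
    then have "complex_of_real t \<in> ball (complex_of_real t0) r1"
      by (simp add: dist_commute)
    then have "\<zeta> = complex_of_real t"
      using r1(3) t(2) \<zeta>(1) inj_on_eq_iff by fastforce
    then show "Im \<zeta> = 0" by simp
  qed (use r1(1) e(1) in simp)
qed

lemma local_inverse_at_arc:
  assumes t: "t \<in> {0..1}"
  obtains V \<Phi> where "open V" "Fr t \<in> V" "\<Phi> holomorphic_on V" "\<Phi> (Fr t) = complex_of_real t"
    "deriv \<Phi> (Fr t) * deriv F (complex_of_real t) = 1" "\<And>z. z \<in> V \<Longrightarrow> F (\<Phi> z) = z"
proof -
  define c where "c = complex_of_real t"
  obtain U where U0: "open U" "complex_of_real ` {0..1} \<subseteq> U" "F holomorphic_on U"
      "\<And>t. t \<in> {0..1} \<Longrightarrow> deriv F (complex_of_real t) \<noteq> 0"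
    using analytic_arcE by metis
  have U: "open U" "c \<in> U" "F holomorphic_on U" "deriv F c \<noteq> 0"
    using U0 t unfolding c_def by auto
  obtain r where r: "0 < r" "ball c r \<subseteq> U" "inj_on F (ball c r)"
    using has_complex_derivative_locally_injective[OF U(3,2,1), of thesis] U(4) by metis
  have hol: "F holomorphic_on ball c r"
    using U(3) r(2) holomorphic_on_subset by blast
  obtain \<Phi> where \<Phi>: "\<Phi> holomorphic_on F ` ball c r"
      "\<And>z. z \<in> ball c r \<Longrightarrow> deriv F z * deriv \<Phi> (F z) = 1" "\<And>z. z \<in> ball c r \<Longrightarrow> \<Phi> (F z) = z"
    using holomorphic_has_inverse[OF hol open_ball r(3)] by blast
  have "c \<in> ball c r" using r(1) by simp
  show thesis
  proof (rule that[OF open_mapping_thm3[OF hol open_ball r(3)] _ \<Phi>(1)])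
    show "Fr t \<in> F ` ball c r" "\<Phi> (Fr t) = complex_of_real t"
        "deriv \<Phi> (Fr t) * deriv F (complex_of_real t) = 1"
      using \<open>c \<in> ball c r\<close> \<Phi>(2,3)[of c] unfolding c_def by (simp_all add: ac_simps)
    show "F (\<Phi> z) = z" if "z \<in> F ` ball c r" for z
      using that \<Phi>(3) by auto
  qed
qed

text \<open>Approach \<open>Fr t\<close> along the left normal \<open>z(e) = Fr t + e \<i> F'(t)\<close>, which lies in the
  inside by hypothesis; pulled back by the local inverse of F, the points \<open>\<zeta>(e)\<close> lie in the
  upper half plane.\<close>

lemma upper_half_plane_approach:
  assumes t: "t \<in> {0<..<1}"
  obtains \<zeta> :: "real \<Rightarrow> complex" where "(\<zeta> \<longlongrightarrow> complex_of_real t) (at_right 0)" "\<forall>\<^sub>F e in at_right 0. 0 < Im (\<zeta> e)"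
    "((\<lambda>e. w (F (\<zeta> e))) \<longlongrightarrow> wb (Fr t)) (at_right 0)"
proof -
  define c D where "c = complex_of_real t" and "D = deriv F c"
  have "t \<in> {0..1}" using t by simp
  then obtain V \<Phi> where V0: "open V" "Fr t \<in> V" "\<Phi> holomorphic_on V" "\<Phi> (Fr t) = complex_of_real t"
      "deriv \<Phi> (Fr t) * deriv F (complex_of_real t) = 1" "\<And>z. z \<in> V \<Longrightarrow> F (\<Phi> z) = z"
    by (rule local_inverse_at_arc) blast
  note V = V0[folded c_def, folded D_def]
  have "D \<noteq> 0" using V(5) by auto
  define z where "z e = F c + complex_of_real e * \<i> * D" for e :: real
  have z_lim: "(z \<longlongrightarrow> F c) (at_right 0)"
    unfolding z_def by (auto intro!: tendsto_eq_intros)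
  have "\<forall>\<^sub>F e in at_right 0. z e \<in> inside (path_image g)"
    using left[rule_format, OF t] unfolding z_def c_def D_def .
  moreover have "\<forall>\<^sub>F e in at_right (0::real). z e \<noteq> F c"
    using eventually_at_right_less[of 0] by eventually_elim (use \<open>D \<noteq> 0\<close> in \<open>simp add: z_def\<close>)
  ultimately have z_at: "filterlim z (at (F c) within inside (path_image g)) (at_right 0)"
    using z_lim eventually_conj unfolding filterlim_at by blast
  have "F c \<in> path_image g"
    using contains t unfolding c_def arc_image_def by auto
  then have w_lim: "((\<lambda>e. w (z e)) \<longlongrightarrow> wb (F c)) (at_right 0)"
    using filterlim_compose[OF wb[rule_format] z_at] by blast
  have F_inverse: "\<forall>\<^sub>F e in at_right 0. F (\<Phi> (z e)) = z e"
    using topological_tendstoD[OF z_lim V(1,2)] by eventually_elim (use V(6) in auto)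
  have "isCont \<Phi> (F c)"
    using holomorphic_on_imp_continuous_on[OF V(3)] V(1,2) continuous_on_eq_continuous_at by blast
  from isCont_tendsto_compose[OF this z_lim]
  have "((\<lambda>e. \<Phi> (z e)) \<longlongrightarrow> c) (at_right 0)"
    unfolding V(4) .
  moreover have "\<forall>\<^sub>F e in at_right 0. Im (\<Phi> (F c)) < Im (\<Phi> (z e))"
    using eventually_Im_shift_gt[OF holomorphic_derivI[OF V(3,1,2)] V(5)]
    unfolding z_def .
  then have "\<forall>\<^sub>F e in at_right 0. 0 < Im (\<Phi> (z e))"
    unfolding V(4) by (simp add: c_def)
  moreover have "\<forall>\<^sub>F e in at_right 0. w (z e) = w (F (\<Phi> (z e)))"
    using F_inverse by eventually_elim simp
  then have "((\<lambda>e. w (F (\<Phi> (z e)))) \<longlongrightarrow> wb (F c)) (at_right 0)"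
    by (rule Lim_transform_eventually[OF w_lim])
  ultimately show thesis
    unfolding c_def by (rule that[of "\<lambda>e. \<Phi> (z e)"])
qed

lemma deriv_w_comp_bounded_near_arc:
  assumes t0: "t0 \<in> {0<..<1}"
  obtains r B where "0 < r"
    "\<And>\<zeta>. \<zeta> \<in> ball (complex_of_real t0) r \<Longrightarrow> F \<zeta> \<notin> arc_image F \<Longrightarrow>
       ((\<lambda>\<zeta>. w (F \<zeta>)) has_field_derivative deriv w (F \<zeta>) * deriv F \<zeta>) (at \<zeta>)"
    "\<And>\<zeta>. \<zeta> \<in> ball (complex_of_real t0) r \<Longrightarrow> F \<zeta> \<notin> arc_image F \<Longrightarrow>
       norm (deriv w (F \<zeta>) * deriv F \<zeta>) \<le> B"
proof -
  define c where "c = complex_of_real t0"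
  obtain U where U0: "open U" "complex_of_real ` {0..1} \<subseteq> U" "F holomorphic_on U"
    using analytic_arcE by metis
  have U: "open U" "c \<in> U" "F holomorphic_on U"
    using U0 t0 unfolding c_def by auto
  \<comment> \<open>the norm of the derivative of \<open>w \<circ> F\<close>, continuous at c since \<open>F c \<noteq> \<plusminus>1\<close>\<close>
  define q where "q \<zeta> = norm (F \<zeta>) / sqrt (norm ((F \<zeta>)\<^sup>2 - 1)) * norm (deriv F \<zeta>)" for \<zeta>
  have "(F c)\<^sup>2 \<noteq> 1"
    using Fr_interior_not_ends[OF t0] unfolding c_def by (auto simp: power2_eq_1_iff)
  moreover have "isCont F c" "isCont (deriv F) c"
    using holomorphic_on_imp_continuous_on[OF U(3)] holomorphic_on_imp_continuous_on[OF holomorphic_deriv[OF U(3,1)]]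
      U(1,2) continuous_on_eq_continuous_at by blast+
  ultimately have "isCont q c"
    unfolding q_def by (intro continuous_intros) auto
  then obtain r1 where r1: "0 < r1" "\<And>\<zeta>. dist \<zeta> c < r1 \<Longrightarrow> dist (q \<zeta>) (q c) < 1"
    unfolding continuous_at_eps_delta by (meson zero_less_one)
  obtain r2 where r2: "0 < r2" "ball c r2 \<subseteq> U"
    using U(1,2) openE by blast
  show thesis
  proof (rule that[of "min r1 r2" "q c + 1"])
    fix \<zeta> assume \<zeta>: "\<zeta> \<in> ball (complex_of_real t0) (min r1 r2)" "F \<zeta> \<notin> arc_image F"
    then show "((\<lambda>\<zeta>. w (F \<zeta>)) has_field_derivative deriv w (F \<zeta>) * deriv F \<zeta>) (at \<zeta>)"
      using DERIV_chain2[OF holomorphic_derivI[OF w_hol open_arc_complement] holomorphic_derivI[OF U(3,1)]]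
        r2(2) unfolding c_def by auto
    have "norm (deriv w (F \<zeta>) * deriv F \<zeta>) = q \<zeta>"
      using norm_deriv_w[OF \<zeta>(2)] unfolding q_def by (simp add: norm_mult)
    moreover have "dist (q \<zeta>) (q c) < 1"
      using r1(2)[of \<zeta>] \<zeta>(1) unfolding c_def by (simp add: dist_commute)
    ultimately show "norm (deriv w (F \<zeta>) * deriv F \<zeta>) \<le> q c + 1"
      by (simp add: dist_real_def)
  qed (use r1 r2 in simp)
qed

lemma lipschitz_above_arc:
  assumes t0: "t0 \<in> {0<..<1}"
  obtains r B where "0 < r"
    "\<And>\<zeta>1 \<zeta>2. \<zeta>1 \<in> ball (complex_of_real t0) r \<Longrightarrow> \<zeta>2 \<in> ball (complex_of_real t0) r \<Longrightarrow>
       0 < Im \<zeta>1 \<Longrightarrow> 0 < Im \<zeta>2 \<Longrightarrow> norm (w (F \<zeta>1) - w (F \<zeta>2)) \<le> B * norm (\<zeta>1 - \<zeta>2)"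
proof -
  obtain r1 where r1: "0 < r1"
      "\<And>\<zeta>. \<zeta> \<in> ball (complex_of_real t0) r1 \<Longrightarrow> F \<zeta> \<in> arc_image F \<Longrightarrow> Im \<zeta> = 0"
    using arc_preimage_real[of t0] t0 by auto
  obtain r2 B where r2: "0 < r2"
    "\<And>\<zeta>. \<zeta> \<in> ball (complex_of_real t0) r2 \<Longrightarrow> F \<zeta> \<notin> arc_image F \<Longrightarrow>
       ((\<lambda>\<zeta>. w (F \<zeta>)) has_field_derivative deriv w (F \<zeta>) * deriv F \<zeta>) (at \<zeta>)"
    "\<And>\<zeta>. \<zeta> \<in> ball (complex_of_real t0) r2 \<Longrightarrow> F \<zeta> \<notin> arc_image F \<Longrightarrow>
       norm (deriv w (F \<zeta>) * deriv F \<zeta>) \<le> B"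
    using deriv_w_comp_bounded_near_arc[OF t0] by blast
  define H where "H = ball (complex_of_real t0) (min r1 r2) \<inter> {\<zeta>. 0 < Im \<zeta>}"
  have off_arc: "F \<zeta> \<notin> arc_image F" if "\<zeta> \<in> H" for \<zeta>
    using r1(2)[of \<zeta>] that unfolding H_def by auto
  have convex: "convex H"
    unfolding H_def by (intro convex_Int convex_ball convex_halfspace_Im_gt)
  have deriv: "((\<lambda>\<zeta>. w (F \<zeta>)) has_field_derivative deriv w (F \<zeta>) * deriv F \<zeta>) (at \<zeta> within H)"
    if "\<zeta> \<in> H" for \<zeta>
    using r2(2)[OF _ off_arc[OF that]] that unfolding H_def by (simp add: has_field_derivative_at_within)
  have bound: "norm (deriv w (F \<zeta>) * deriv F \<zeta>) \<le> B" if "\<zeta> \<in> H" for \<zeta>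
    using r2(3)[OF _ off_arc[OF that]] that unfolding H_def by simp
  show thesis
  proof (rule that[of "min r1 r2" B])
    fix \<zeta>1 \<zeta>2 assume "\<zeta>1 \<in> ball (complex_of_real t0) (min r1 r2)" "\<zeta>2 \<in> ball (complex_of_real t0) (min r1 r2)"
      "0 < Im \<zeta>1" "0 < Im \<zeta>2"
    then have "\<zeta>1 \<in> H" "\<zeta>2 \<in> H" unfolding H_def by simp_all
    then show "norm (w (F \<zeta>1) - w (F \<zeta>2)) \<le> B * norm (\<zeta>1 - \<zeta>2)"
      using field_differentiable_bound[OF convex deriv bound] by simp
  qed (use r1(1) r2(1) in simp)
qed

lemma lipschitz_boundary_values_along_arc:
  assumes t0: "t0 \<in> {0<..<1}"
  obtains \<eta> B where "0 < \<eta>"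
    "\<And>t1 t2. \<bar>t1 - t0\<bar> < \<eta> \<Longrightarrow> \<bar>t2 - t0\<bar> < \<eta> \<Longrightarrow> norm (wb (Fr t1) - wb (Fr t2)) \<le> B * \<bar>t1 - t2\<bar>"
proof -
  obtain r B where r: "0 < r"
    "\<And>\<zeta>1 \<zeta>2. \<zeta>1 \<in> ball (complex_of_real t0) r \<Longrightarrow> \<zeta>2 \<in> ball (complex_of_real t0) r \<Longrightarrow>
       0 < Im \<zeta>1 \<Longrightarrow> 0 < Im \<zeta>2 \<Longrightarrow> norm (w (F \<zeta>1) - w (F \<zeta>2)) \<le> B * norm (\<zeta>1 - \<zeta>2)"
    using lipschitz_above_arc[OF t0] by blast
  define \<eta> where "\<eta> = min r (min t0 (1 - t0))"
  show thesis
  proof (rule that)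
    show "0 < \<eta>" using r(1) t0 unfolding \<eta>_def by simp
    fix t1 t2 assume t: "\<bar>t1 - t0\<bar> < \<eta>" "\<bar>t2 - t0\<bar> < \<eta>"
    have "t1 \<in> {0<..<1}" "t2 \<in> {0<..<1}"
      using t unfolding \<eta>_def by (auto simp: abs_less_iff)
    obtain \<zeta>1 :: "real \<Rightarrow> complex" where
      \<zeta>1: "(\<zeta>1 \<longlongrightarrow> complex_of_real t1) (at_right 0)" "\<forall>\<^sub>F e in at_right 0. 0 < Im (\<zeta>1 e)"
        "((\<lambda>e. w (F (\<zeta>1 e))) \<longlongrightarrow> wb (Fr t1)) (at_right 0)"
      by (rule upper_half_plane_approach[OF \<open>t1 \<in> _\<close>])
    obtain \<zeta>2 :: "real \<Rightarrow> complex" where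
      \<zeta>2: "(\<zeta>2 \<longlongrightarrow> complex_of_real t2) (at_right 0)" "\<forall>\<^sub>F e in at_right 0. 0 < Im (\<zeta>2 e)"
        "((\<lambda>e. w (F (\<zeta>2 e))) \<longlongrightarrow> wb (Fr t2)) (at_right 0)"
      by (rule upper_half_plane_approach[OF \<open>t2 \<in> _\<close>])
    have "complex_of_real t1 \<in> ball (complex_of_real t0) r" "complex_of_real t2 \<in> ball (complex_of_real t0) r"
      using t unfolding \<eta>_def by (auto simp: dist_norm abs_minus_commute simp flip: of_real_diff)
    then have "\<forall>\<^sub>F e in at_right 0. \<zeta>1 e \<in> ball (complex_of_real t0) r" "\<forall>\<^sub>F e in at_right 0. \<zeta>2 e \<in> ball (complex_of_real t0) r"
      using topological_tendstoD[OF \<zeta>1(1) open_ball] topological_tendstoD[OF \<zeta>2(1) open_ball] by blast+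
    then have "\<forall>\<^sub>F e in at_right 0. norm (w (F (\<zeta>1 e)) - w (F (\<zeta>2 e))) \<le> B * norm (\<zeta>1 e - \<zeta>2 e)"
      using \<zeta>1(2) \<zeta>2(2) by eventually_elim (rule r(2))
    moreover have "((\<lambda>e. norm (w (F (\<zeta>1 e)) - w (F (\<zeta>2 e)))) \<longlongrightarrow> norm (wb (Fr t1) - wb (Fr t2))) (at_right 0)"
      by (intro tendsto_intros \<zeta>1(3) \<zeta>2(3))
    moreover have "((\<lambda>e. B * norm (\<zeta>1 e - \<zeta>2 e)) \<longlongrightarrow> B * norm (complex_of_real t1 - complex_of_real t2)) (at_right 0)"
      by (intro tendsto_intros \<zeta>1(1) \<zeta>2(1))
    ultimately have "norm (wb (Fr t1) - wb (Fr t2)) \<le> B * norm (complex_of_real t1 - complex_of_real t2)"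
      using tendsto_le[OF trivial_limit_at_right_real] by blast
    then show "norm (wb (Fr t1) - wb (Fr t2)) \<le> B * \<bar>t1 - t2\<bar>"
      by (simp flip: of_real_diff)
  qed
qed

lemma isCont_boundary_values_along_arc:
  assumes t0: "t0 \<in> {0<..<1}"
  shows "isCont (\<lambda>t. wb (Fr t)) t0"
proof -
  obtain \<eta> B where \<eta>: "0 < \<eta>"
    "\<And>t1 t2. \<bar>t1 - t0\<bar> < \<eta> \<Longrightarrow> \<bar>t2 - t0\<bar> < \<eta> \<Longrightarrow> norm (wb (Fr t1) - wb (Fr t2)) \<le> B * \<bar>t1 - t2\<bar>"
    using lipschitz_boundary_values_along_arc[OF t0] by blast
  have "\<forall>\<^sub>F t in at t0. norm (wb (Fr t) - wb (Fr t0)) \<le> B * \<bar>t - t0\<bar>"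
    using \<eta> unfolding eventually_at by (auto simp: dist_real_def)
  moreover have "((\<lambda>t. B * \<bar>t - t0\<bar>) \<longlongrightarrow> 0) (at t0)"
    by (auto intro!: tendsto_eq_intros)
  ultimately have "((\<lambda>t. wb (Fr t) - wb (Fr t0)) \<longlongrightarrow> 0) (at t0)"
    by (rule Lim_null_comparison)
  then show ?thesis
    unfolding isCont_def by (simp add: LIM_zero_iff)
qed

lemma continuous_within_arc_boundary_values:
  assumes t0: "t0 \<in> {0<..<1}"
  shows "continuous (at (Fr t0) within arc_image F) wb"
proof -
  obtain Finv where hom: "homeomorphism {0..1} (arc_image F) Fr Finv"
    using homeomorphism_compact[OF compact_Icc continuous_on_Fr arc_image_eq[symmetric] inj_on_Fr] by blast
  have t01: "t0 \<in> {0..1}" using t0 by simp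
  then have "isCont (\<lambda>t. wb (Fr t)) (Finv (Fr t0))"
    using homeomorphism_apply1[OF hom] isCont_boundary_values_along_arc[OF t0] by simp
  moreover have "continuous (at (Fr t0) within arc_image F) Finv"
    using homeomorphism_cont2[OF hom] t01 unfolding arc_image_eq
    by (simp add: continuous_on_eq_continuous_within)
  ultimately have "continuous (at (Fr t0) within arc_image F) (\<lambda>\<tau>. wb (Fr (Finv \<tau>)))"
    by (rule continuous_within_compose3)
  moreover have "Fr t0 \<in> arc_image F" using t01 unfolding arc_image_eq by simp
  ultimately show ?thesis
  proof (rule continuous_transform_within[OF _ zero_less_one])
    show "wb (Fr (Finv \<tau>)) = wb \<tau>" if "\<tau> \<in> arc_image F" for \<tau>
      using homeomorphism_apply2[OF hom that] by simp
  qed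
qed

theorem continuous_on_boundary_values: "continuous_on (path_image g - {1, -1}) wb"
  unfolding continuous_on_eq_continuous_within
proof
  fix \<tau>0 assume \<tau>0: "\<tau>0 \<in> path_image g - {1, -1}"
  show "continuous (at \<tau>0 within path_image g - {1, -1}) wb"
  proof (cases "\<tau>0 \<in> arc_image F")
    case False
    obtain d where d: "0 < d" "ball \<tau>0 d \<subseteq> - arc_image F"
      using open_arc_complement False openE by blast
    have "isCont w \<tau>0"
      using holomorphic_on_imp_continuous_on[OF w_hol] open_arc_complement False
        continuous_on_eq_continuous_at by blast
    then have "continuous (at \<tau>0 within path_image g - {1, -1}) w"
      by (rule continuous_at_imp_continuous_within)
    then show ?thesis
    proof (rule continuous_transform_within[OF _ d(1) \<tau>0])
      fix \<tau> assume "\<tau> \<in> path_image g - {1, -1}" "dist \<tau> \<tau>0 < d"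
      then show "w \<tau> = wb \<tau>"
        using wb_eq_w d(2) by (auto simp: dist_commute)
    qed
  next
    case True
    then obtain t0 where t0: "t0 \<in> {0..1}" "\<tau>0 = Fr t0"
      unfolding arc_image_eq by auto
    then have t0': "t0 \<in> {0<..<1}"
      using \<tau>0 arc_ends by (cases "t0 = 0 \<or> t0 = 1") auto
    obtain r where r: "0 < r" "path_image g \<inter> ball \<tau>0 r \<subseteq> arc_image F"
      using path_image_near_arc[OF t0'] t0(2) by blast
    have "continuous (at \<tau>0 within arc_image F) wb"
      using continuous_within_arc_boundary_values[OF t0'] t0(2) by simp
    moreover have "(path_image g - {1, -1}) \<inter> ball \<tau>0 r \<subseteq> arc_image F"
      using r(2) by blast
    ultimately have "continuous (at \<tau>0 within (path_image g - {1, -1}) \<inter> ball \<tau>0 r) wb"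
      by (rule continuous_within_subset)
    moreover have "at \<tau>0 within path_image g - {1, -1} = at \<tau>0 within (path_image g - {1, -1}) \<inter> ball \<tau>0 r"
      using r(1) by (intro at_within_nhd[of _ "ball \<tau>0 r"]) (auto simp: Int_absorb2)
    ultimately show ?thesis
      by (simp add: continuous_within)
  qed
qed

end

theorem lemma2:
  fixes F :: "complex \<Rightarrow> complex" and g :: "real \<Rightarrow> complex"
    and w wb \<rho> :: "complex \<Rightarrow> complex" and \<sigma> :: real
  assumes arc: "analytic_arc F"
    and arc_ends: "F 0 = -1" "F 1 = 1"
    and curve: "smooth_jordan_param g"
    and contains: "arc_image F \<subseteq> path_image g"
    and left: "\<forall>t\<in>{0<..<1}. \<forall>\<^sub>F e in at_right (0::real).
                 F (complex_of_real t) + complex_of_real e * \<i> * deriv F (complex_of_real t)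
                   \<in> inside (path_image g)"
    and w_hol: "w holomorphic_on (- arc_image F)"
    and w_sq: "\<forall>z\<in>- arc_image F. (w z)\<^sup>2 = z\<^sup>2 - 1"
    and w_inf: "((\<lambda>z. w z / z) \<longlongrightarrow> 1) at_infinity"
    and wb: "\<forall>\<tau>\<in>path_image g. (w \<longlongrightarrow> wb \<tau>) (at \<tau> within inside (path_image g))"
    and sig: "1/2 < \<sigma>" "\<sigma> < 1"
    and rho_holder: "holder_on \<sigma> (path_image g) \<rho>"
    and rho_ends: "\<rho> 1 = 0" "\<rho> (-1) = 0"
  shows "holder_on (\<sigma> - 1/2) (path_image g) (\<lambda>\<tau>. \<rho> \<tau> / wb \<tau>) \<and>
         (\<exists>C2. \<forall>\<tau>1\<in>path_image g - {1, -1}. \<forall>\<tau>2\<in>path_image g - {1, -1}. \<tau>1 \<noteq> \<tau>2 \<longrightarrow>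
            norm (\<rho> \<tau>1 / wb \<tau>1 - \<rho> \<tau>2 / wb \<tau>2)
              \<le> C2 * min (1 / sqrt (norm (1 - \<tau>1\<^sup>2))) (1 / sqrt (norm (1 - \<tau>2\<^sup>2)))
                   * norm (\<tau>1 - \<tau>2) powr \<sigma>)"
proof -
  \<comment> \<open>w_inf only selects one of the two branches; the estimates hold for both.\<close>
  interpret sqrt_boundary_values g F w wb
    by unfold_locales (use assms in auto)
  obtain K where K: "0 < K" "bounded_turning K (path_image g)"
    by (rule bounded_turning_path_image)
  obtain R0 where "\<And>\<tau>. \<tau> \<in> path_image g \<Longrightarrow> norm \<tau> \<le> R0"
    using compact_imp_bounded[OF compact_path_image[OF simple_path_imp_path[OF simple_loop(1)]]]
    unfolding bounded_iff by blast
  then have R: "0 < max R0 1" "\<And>\<tau>. \<tau> \<in> path_image g \<Longrightarrow> norm \<tau> \<le> max R0 1"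
    by (auto intro: max.coboundedI1)
  obtain C where C: "0 \<le> C" "\<And>x y. x \<in> path_image g \<Longrightarrow> y \<in> path_image g \<Longrightarrow>
      norm (\<rho> x - \<rho> y) \<le> C * dist x y powr \<sigma>"
    using holder_onE[OF rho_holder] by blast
  interpret sqrt_quotient "path_image g" \<rho> wb \<sigma> C "max R0 1" "min 1 (1 / (8 * max R0 1 * K))"
  proof
    fix \<tau>1 \<tau>2 assume \<tau>: "\<tau>1 \<in> path_image g" "\<tau>2 \<in> path_image g"
      and "norm (\<tau>1 - \<tau>2) < min 1 (1 / (8 * max R0 1 * K)) * norm (\<tau>2\<^sup>2 - 1)"
    then have "norm (\<tau>1 - \<tau>2) < 1 / (8 * max R0 1 * K) * norm (\<tau>2\<^sup>2 - 1)"
      by (smt (verit) min.cobounded2 mult_right_mono norm_ge_zero)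
    then show "norm (wb \<tau>1 - wb \<tau>2) * norm (wb \<tau>2) \<le> norm (\<tau>1\<^sup>2 - \<tau>2\<^sup>2)"
      using bounded_turning_square_root_branch[OF K(2,1) R(2) R(1) continuous_on_boundary_values
          wb_square \<tau>] by blast
  qed (use R K C wb_square ends_in_path_image rho_ends sig in auto)
  show ?thesis
    using holder_on_quotient quotient_diff_le_min_weight by blast
qed

end
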